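(* There is a universal constant $c>0$ such that the following holds. Let $\Omega\subset\mathbb R^d$ be compact, $\mu$ a probability measure on $\Omega$, $X_N$ an $N$-dimensional subspace of $\mathcal C(\Omega)$, $q\in[2,\infty)$, and $H>0$ such that $\|f\|_\infty\le H\|f\|_q$ for all $f\in X_N$. Let $X_N^q:=\{f\in X_N:\|f\|_q\le1\}$, let $\mathbf x_1,\dots,\mathbf x_m\in\Omega$ be arbitrary fixed points, and let $\chi_1,\dots,\chi_m$ be independent symmetric Bernoulli random variables taking values $\pm1$. Then $$ \mathbb E\Big[\sup_{f\in X_N^q}\Big|\sum_{j=1}^m\chi_j|f(\mathbf x_j)|^q\Big|\Big]\le cqH^{q/2}N^{1/2}\sup_{h\in X_N^q}\Big(\sum_{j=1}^m|h(\mathbf x_j)|^q\Big)^{1/2}. $$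
   Context: $\|f\|_q=(\int_\Omega|f|^qd\mu)^{1/q}$ and $\|f\|_\infty=\max_{\mathbf x\in\Omega}|f(\mathbf x)|$. *)

theory Defs
  imports "HOL-Analysis.Analysis" "HOL-Probability.Probability" "HOL-Library.Function_Algebras"
begin

text \<open>Points of R^d are represented as functions nat => real vanishing from index d on;
  the (product) topology of nat => real restricted to this set is the Euclidean topology.\<close>
definition Rd_set :: "nat \<Rightarrow> (nat \<Rightarrow> real) set" where
  "Rd_set d = {x. \<forall>i\<ge>d. x i = 0}"

definition fscale :: "real \<Rightarrow> ('a \<Rightarrow> real) \<Rightarrow> ('a \<Rightarrow> real)" where
  "fscale c f = (\<lambda>x. c * f x)"

lemma vector_space_fscale: "vector_space fscale"
  by unfold_locales (auto simp: fscale_def fun_eq_iff algebra_simps)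

text \<open>C(Omega): continuous functions on Omega (normalised to be 0 outside Omega,
  so that each element of C(Omega) has exactly one representative).\<close>
definition C_space :: "'a::topological_space set \<Rightarrow> ('a \<Rightarrow> real) set" where
  "C_space \<Omega> = {f. continuous_on \<Omega> f \<and> (\<forall>x. x \<notin> \<Omega> \<longrightarrow> f x = 0)}"

definition Lq_norm :: "'a measure \<Rightarrow> real \<Rightarrow> ('a \<Rightarrow> real) \<Rightarrow> real" where
  "Lq_norm \<mu> q f = (\<integral>x. \<bar>f x\<bar> powr q \<partial>\<mu>) powr (1 / q)"

definition sup_norm :: "'a set \<Rightarrow> ('a \<Rightarrow> real) \<Rightarrow> real" where
  "sup_norm \<Omega> f = (SUP x\<in>\<Omega>. \<bar>f x\<bar>)"

end

(*
  The values f(x_j) of functions f in the unit ball T of X in L^q are bounded by H (Nikolskii),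
  and the increments of the Rademacher process Z(f) = sum_j eps_j |f(x_j)|^q are sub-Gaussian:
  (|a|^q - |b|^q)^2 <= q^2 (a - b)^2 H^(q-2) (|a|^q + |b|^q), so Z(f) - Z(g) has variance proxy
  at most 2 q^2 H^(q-2) S max_j |f(x_j) - g(x_j)|^2, with S = sup_h sum_j |h(x_j)|^q.
  The sample vectors (f(x_j))_j are determined by n <= N interpolation points, so a volume
  argument in R^n gives delta-nets of T for the maximum over the sample of cardinality
  (1 + 2H/delta)^n.  Chaining along the dyadic scales H/2^l with the maximal inequality for
  Rademacher sums then bounds the expected supremum by a multiple of
  q H^(q/2) sqrt S sum_l sqrt(n (l + 3)) / 2^l, which is of order q H^(q/2) sqrt(n S).
*)
theory Submission
  imports Defs
begin

section \<open>Rademacher averages\<close>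

lemma cosh_le_exp_square_half:
  fixes x :: real
  shows "cosh x \<le> exp (x\<^sup>2 / 2)"
proof -
  have nonneg: "cosh y \<le> exp (y\<^sup>2 / 2)" if "y \<ge> 0" for y :: real
  proof -
    \<comment> \<open>Hoeffding's lemma for the two-point distribution on \<open>{0, 2 * y}\<close>\<close>
    have "ln (1 + (1/2) * (exp (2*y) - 1)) \<le> y + y\<^sup>2 / 2"
      using Hoeffdings_lemma_aux[of "2*y" "1/2"] that by (simp add: power2_eq_square)
    hence "exp (ln ((1 + exp (2*y)) / 2)) \<le> exp (y + y\<^sup>2 / 2)"
      by (simp add: field_simps)
    hence "(1 + exp (2*y)) / 2 \<le> exp (y + y\<^sup>2 / 2)"
      by (simp add: add_pos_pos)
    hence "(1 + exp (2*y)) / 2 * exp (-y) \<le> exp (y + y\<^sup>2 / 2) * exp (-y)"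
      by simp
    thus ?thesis
      by (simp add: cosh_def field_simps flip: exp_add)
  qed
  show ?thesis
    using nonneg[of x] nonneg[of "-x"] by (cases "x \<ge> 0") auto
qed

definition signs :: "nat \<Rightarrow> (nat \<Rightarrow> real) set" where
  "signs m = {..<m} \<rightarrow>\<^sub>E {-1, 1}"

definition rademacher_avg :: "nat \<Rightarrow> ((nat \<Rightarrow> real) \<Rightarrow> real) \<Rightarrow> real" where
  "rademacher_avg m F = (\<Sum>\<epsilon>\<in>signs m. F \<epsilon>) / 2 ^ m"

lemma finite_signs [simp]: "finite (signs m)"
  by (auto simp: signs_def intro!: finite_PiE)

lemma card_signs [simp]: "card (signs m) = 2 ^ m"
  by (simp add: signs_def card_PiE numeral_2_eq_2)

lemma signs_nonempty [simp]: "signs m \<noteq> {}"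
  using card_signs[of m] by (metis card.empty power_not_zero zero_neq_numeral)

lemma abs_sign: "\<epsilon> \<in> signs m \<Longrightarrow> j < m \<Longrightarrow> \<bar>\<epsilon> j\<bar> = 1"
  by (force simp: signs_def PiE_iff)

lemma rademacher_avg_mono:
  "(\<And>\<epsilon>. \<epsilon> \<in> signs m \<Longrightarrow> F \<epsilon> \<le> G \<epsilon>) \<Longrightarrow> rademacher_avg m F \<le> rademacher_avg m G"
  unfolding rademacher_avg_def by (intro divide_right_mono sum_mono) auto

lemma rademacher_avg_const [simp]: "rademacher_avg m (\<lambda>_. c) = c"
  by (simp add: rademacher_avg_def)

lemma rademacher_avg_add:
  "rademacher_avg m (\<lambda>\<epsilon>. F \<epsilon> + G \<epsilon>) = rademacher_avg m F + rademacher_avg m G"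
  by (simp add: rademacher_avg_def sum.distrib add_divide_distrib)

lemma rademacher_avg_sum:
  "rademacher_avg m (\<lambda>\<epsilon>. \<Sum>l\<in>A. F l \<epsilon>) = (\<Sum>l\<in>A. rademacher_avg m (F l))"
  by (simp add: rademacher_avg_def sum.swap[of _ "signs m"] sum_divide_distrib)

lemma rademacher_avg_cmult:
  "rademacher_avg m (\<lambda>\<epsilon>. c * F \<epsilon>) = c * rademacher_avg m F"
  by (simp add: rademacher_avg_def sum_distrib_left)

lemma exp_rademacher_avg_le: "exp (rademacher_avg m F) \<le> rademacher_avg m (\<lambda>\<epsilon>. exp (F \<epsilon>))"
  using convex_on_sum[OF finite_signs signs_nonempty exp_convex, where a="\<lambda>_. 1 / 2 ^ m" and y=F]
  by (simp add: rademacher_avg_def sum_divide_distrib)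

lemma rademacher_avg_exp_le:
  fixes a :: "nat \<Rightarrow> real"
  shows "rademacher_avg m (\<lambda>\<epsilon>. exp (l * (\<Sum>j<m. \<epsilon> j * a j))) \<le> exp (l\<^sup>2 * (\<Sum>j<m. (a j)\<^sup>2) / 2)"
proof -
  have "(\<Sum>\<epsilon>\<in>signs m. exp (l * (\<Sum>j<m. \<epsilon> j * a j))) = (\<Sum>\<epsilon>\<in>signs m. \<Prod>j<m. exp (l * a j * \<epsilon> j))"
    by (intro sum.cong refl) (simp add: sum_distrib_left exp_sum mult_ac)
  also have "\<dots> = (\<Prod>j<m. \<Sum>e\<in>{-1, 1}. exp (l * a j * e))"
    unfolding signs_def by (rule prod_sum_PiE[symmetric]) auto
  also have "\<dots> = (\<Prod>j<m. 2 * cosh (l * a j))"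
    by (intro prod.cong refl) (simp add: cosh_def)
  also have "\<dots> \<le> (\<Prod>j<m. 2 * exp ((l * a j)\<^sup>2 / 2))"
    using cosh_le_exp_square_half cosh_real_pos by (intro prod_mono) (simp add: less_imp_le)
  also have "\<dots> = 2 ^ m * exp (l\<^sup>2 * (\<Sum>j<m. (a j)\<^sup>2) / 2)"
    by (simp add: prod.distrib exp_sum[symmetric] sum_divide_distrib sum_distrib_left power_mult_distrib)
  finally show ?thesis
    by (simp add: rademacher_avg_def pos_divide_le_eq mult.commute)
qed

lemma exp_mult_Max_abs_le_sum:
  fixes z :: "'i \<Rightarrow> real"
  assumes "finite I" "I \<noteq> {}" "0 \<le> l"
  shows "exp (l * Max ((\<lambda>i. \<bar>z i\<bar>) ` I)) \<le> (\<Sum>i\<in>I. exp (l * z i) + exp (- l * z i))"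
proof -
  have "Max ((\<lambda>i. \<bar>z i\<bar>) ` I) \<in> (\<lambda>i. \<bar>z i\<bar>) ` I"
    using assms(1,2) by (intro Max_in) auto
  then obtain i where i: "i \<in> I" "Max ((\<lambda>i. \<bar>z i\<bar>) ` I) = \<bar>z i\<bar>"
    by auto
  have "exp (l * \<bar>z i\<bar>) \<le> exp (l * z i) + exp (- l * z i)"
    by (cases "z i \<ge> 0") (auto simp: add_increasing add_increasing2)
  also have "\<dots> \<le> (\<Sum>i\<in>I. exp (l * z i) + exp (- l * z i))"
    by (rule member_le_sum[OF i(1)]) (auto intro: add_nonneg_nonneg assms(1))
  finally show ?thesis
    by (simp add: i(2))
qed

lemma rademacher_avg_Max_abs_le:
  fixes a :: "'i \<Rightarrow> nat \<Rightarrow> real"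
  assumes I: "finite I" "I \<noteq> {}" and "\<sigma> \<ge> 0"
    and bound: "\<And>i. i \<in> I \<Longrightarrow> (\<Sum>j<m. (a i j)\<^sup>2) \<le> \<sigma>\<^sup>2"
  shows "rademacher_avg m (\<lambda>\<epsilon>. Max ((\<lambda>i. \<bar>\<Sum>j<m. \<epsilon> j * a i j\<bar>) ` I))
           \<le> \<sigma> * sqrt (2 * ln (2 * real (card I)))"
proof (cases "\<sigma> = 0")
  case True
  have "a i j = 0" if "i \<in> I" "j < m" for i j
    using bound[OF that(1)] True that(2) sum_nonneg_eq_0_iff[of "{..<m}" "\<lambda>j. (a i j)\<^sup>2"]
    by (simp add: order_antisym sum_nonneg)
  with I True show ?thesis
    by (simp cong: image_cong)
next
  case False
  define Z where "Z = (\<lambda>i \<epsilon>. \<Sum>j<m. \<epsilon> j * a i j)"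
  define M where "M = (\<lambda>\<epsilon>. Max ((\<lambda>i. \<bar>Z i \<epsilon>\<bar>) ` I))"
  define Lg where "Lg = ln (2 * real (card I))"
  define l where "l = sqrt (2 * Lg) / \<sigma>"
  have "card I \<ge> 1"
    using I by (simp add: Suc_le_eq card_gt_0_iff)
  hence "Lg > 0"
    by (simp add: Lg_def)
  hence l: "l > 0" "l\<^sup>2 * \<sigma>\<^sup>2 = 2 * Lg"
    using False \<open>\<sigma> \<ge> 0\<close> by (simp_all add: l_def power_divide)
  have mgf: "rademacher_avg m (\<lambda>\<epsilon>. exp (l' * Z i \<epsilon>)) \<le> exp Lg" if "i \<in> I" "l'\<^sup>2 = l\<^sup>2" for i l'
  proof -
    have "rademacher_avg m (\<lambda>\<epsilon>. exp (l' * Z i \<epsilon>)) \<le> exp (l'\<^sup>2 * (\<Sum>j<m. (a i j)\<^sup>2) / 2)"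
      unfolding Z_def by (rule rademacher_avg_exp_le)
    also have "\<dots> \<le> exp (l\<^sup>2 * \<sigma>\<^sup>2 / 2)"
      using bound[OF that(1)] that(2) by (simp add: mult_left_mono)
    finally show ?thesis
      using l(2) by simp
  qed
  have "exp (l * rademacher_avg m M) \<le> rademacher_avg m (\<lambda>\<epsilon>. exp (l * M \<epsilon>))"
    using exp_rademacher_avg_le[of m "\<lambda>\<epsilon>. l * M \<epsilon>"] by (simp add: rademacher_avg_cmult)
  also have "\<dots> \<le> rademacher_avg m (\<lambda>\<epsilon>. \<Sum>i\<in>I. exp (l * Z i \<epsilon>) + exp (- l * Z i \<epsilon>))"
    unfolding M_def using I l(1) by (intro rademacher_avg_mono exp_mult_Max_abs_le_sum) auto
  also have "\<dots> = (\<Sum>i\<in>I. rademacher_avg m (\<lambda>\<epsilon>. exp (l * Z i \<epsilon>)) + rademacher_avg m (\<lambda>\<epsilon>. exp (- l * Z i \<epsilon>)))"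
    by (simp only: rademacher_avg_sum rademacher_avg_add)
  also have "\<dots> \<le> (\<Sum>i\<in>I. exp Lg + exp Lg)"
    by (intro sum_mono add_mono mgf) simp_all
  also have "\<dots> = exp Lg * exp Lg"
    using \<open>card I \<ge> 1\<close> by (simp add: Lg_def)
  also have "\<dots> = exp (2 * Lg)"
    by (subst exp_add[symmetric]) simp
  finally have "l * rademacher_avg m M \<le> 2 * Lg"
    by simp
  hence "rademacher_avg m M \<le> 2 * Lg / l"
    using l(1) by (simp add: field_simps)
  also have "2 * Lg / l = \<sigma> * sqrt (2 * Lg)"
    using False \<open>\<sigma> \<ge> 0\<close> \<open>Lg > 0\<close> by (simp add: l_def field_simps)
  finally show ?thesis
    by (simp add: M_def Z_def Lg_def)
qed

corollary rademacher_avg_Max_abs_le_pow2: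
  fixes a :: "'i \<Rightarrow> nat \<Rightarrow> real"
  assumes "finite I" "I \<noteq> {}" "card I \<le> 2 ^ k" "\<sigma> \<ge> 0"
    and "\<And>i. i \<in> I \<Longrightarrow> (\<Sum>j<m. (a i j)\<^sup>2) \<le> \<sigma>\<^sup>2"
  shows "rademacher_avg m (\<lambda>\<epsilon>. Max ((\<lambda>i. \<bar>\<Sum>j<m. \<epsilon> j * a i j\<bar>) ` I))
           \<le> \<sigma> * sqrt (2 * (real k + 1))"
proof -
  have "ln (2 * real (card I)) \<le> ln (2 ^ (k + 1))"
    using assms(1-3) by (subst ln_le_cancel_iff) (auto simp: card_gt_0_iff)
  also have "\<dots> = (k + 1) * ln 2"
    by (rule ln_realpow)
  also have "\<dots> \<le> k + 1"
    using ln_2_less_1 by (simp add: mult_left_le)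
  finally have "\<sigma> * sqrt (2 * ln (2 * real (card I))) \<le> \<sigma> * sqrt (2 * (real k + 1))"
    using assms(4) by (intro mult_left_mono) auto
  moreover have "rademacher_avg m (\<lambda>\<epsilon>. Max ((\<lambda>i. \<bar>\<Sum>j<m. \<epsilon> j * a i j\<bar>) ` I))
      \<le> \<sigma> * sqrt (2 * ln (2 * real (card I)))"
    using assms by (intro rademacher_avg_Max_abs_le) auto
  ultimately show ?thesis
    by linarith
qed

lemma rademacher_avg_SUP_abs_eq_0:
  assumes "T \<noteq> {}" "\<And>\<epsilon> t. t \<in> T \<Longrightarrow> Z \<epsilon> t = 0"
  shows "rademacher_avg m (\<lambda>\<epsilon>. SUP t\<in>T. \<bar>Z \<epsilon> t\<bar>) = 0"
proof -
  have "(SUP t\<in>T. \<bar>Z \<epsilon> t\<bar>) = (SUP t\<in>T. 0)" for \<epsilon>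
    using assms(2) by (intro SUP_cong) auto
  moreover have "(SUP t\<in>T. 0) = (0::real)"
    using assms(1) by (rule cSUP_const)
  ultimately show ?thesis
    by (simp add: rademacher_avg_def)
qed

section \<open>Increments of \<open>|a| powr q\<close>\<close>

lemma powr_diff_le:
  fixes a b q :: real
  assumes "0 \<le> b" "b \<le> a" "1 \<le> q"
  shows "a powr q - b powr q \<le> q * a powr (q - 1) * (a - b)"
proof (cases "b = 0")
  case True
  have "a powr q = a powr (q - 1) * a"
    using assms by (cases "a = 0") (auto simp: powr_mult_base mult.commute)
  moreover have "1 * (a powr (q - 1) * a) \<le> q * (a powr (q - 1) * a)"
    using assms by (intro mult_right_mono) auto
  ultimately show ?thesis
    using True by (simp add: mult.assoc)
next
  case False
  hence "0 < b"
    using assms(1) by simp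
  have "((\<lambda>x. x powr q) has_field_derivative q * a powr (q - 1)) (at a within {0<..})"
    using \<open>0 < b\<close> assms(2) by (auto intro!: derivative_eq_intros)
  hence "q * a powr (q - 1) * (b - a) \<le> b powr q - a powr q"
    using \<open>0 < b\<close> assms(2)
    by (intro convex_on_imp_above_tangent[OF powr_convex[OF assms(3)]]) (auto simp: interior_open)
  thus ?thesis
    by (simp add: algebra_simps)
qed

lemma abs_powr_diff_le_max:
  fixes a b q :: real
  assumes "1 \<le> q"
  shows "\<bar>\<bar>a\<bar> powr q - \<bar>b\<bar> powr q\<bar> \<le> q * max \<bar>a\<bar> \<bar>b\<bar> powr (q - 1) * \<bar>a - b\<bar>"
proof -
  have ordered: "\<bar>s powr q - t powr q\<bar> \<le> q * s powr (q - 1) * \<bar>a - b\<bar>"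
    if "0 \<le> t" "t \<le> s" "s - t \<le> \<bar>a - b\<bar>" for s t :: real
  proof -
    have "\<bar>s powr q - t powr q\<bar> = s powr q - t powr q"
      using that assms by (simp add: powr_mono2)
    also have "\<dots> \<le> q * s powr (q - 1) * (s - t)"
      using powr_diff_le[OF that(1,2) assms] .
    also have "\<dots> \<le> q * s powr (q - 1) * \<bar>a - b\<bar>"
      using that assms by (intro mult_left_mono) auto
    finally show ?thesis .
  qed
  show ?thesis
  proof (cases "\<bar>b\<bar> \<le> \<bar>a\<bar>")
    case True
    thus ?thesis
      using ordered[of "\<bar>b\<bar>" "\<bar>a\<bar>"] by (simp add: max_def)
  next
    case False
    thus ?thesis
      using ordered[of "\<bar>a\<bar>" "\<bar>b\<bar>"] by (simp add: max_def abs_minus_commute)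
  qed
qed

lemma abs_powr_diff_le:
  fixes a b q H :: real
  assumes "\<bar>a\<bar> \<le> H" "\<bar>b\<bar> \<le> H" "1 \<le> q"
  shows "\<bar>\<bar>a\<bar> powr q - \<bar>b\<bar> powr q\<bar> \<le> q * H powr (q - 1) * \<bar>a - b\<bar>"
proof -
  have "max \<bar>a\<bar> \<bar>b\<bar> powr (q - 1) \<le> H powr (q - 1)"
    using assms by (intro powr_mono2) auto
  hence "q * max \<bar>a\<bar> \<bar>b\<bar> powr (q - 1) * \<bar>a - b\<bar> \<le> q * H powr (q - 1) * \<bar>a - b\<bar>"
    using assms by (intro mult_right_mono mult_left_mono) auto
  thus ?thesis
    using abs_powr_diff_le_max[OF assms(3), of a b] by linarith
qed

text \<open>This is what makes the final bound depend on \<open>\<Sum>j<m. \<bar>h (x j)\<bar> powr q\<close> rather than on \<open>m\<close>.\<close>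
lemma abs_powr_diff_square_le:
  fixes a b q H :: real
  assumes "\<bar>a\<bar> \<le> H" "\<bar>b\<bar> \<le> H" "2 \<le> q"
  shows "(\<bar>a\<bar> powr q - \<bar>b\<bar> powr q)\<^sup>2 \<le> q\<^sup>2 * (a - b)\<^sup>2 * H powr (q - 2) * (\<bar>a\<bar> powr q + \<bar>b\<bar> powr q)"
proof (cases "max \<bar>a\<bar> \<bar>b\<bar> = 0")
  case True
  thus ?thesis
    by (simp add: max_def split: if_splits)
next
  case False
  define s where "s = max \<bar>a\<bar> \<bar>b\<bar>"
  have "s > 0"
    using False by (simp add: s_def)
  have square: "(s powr (q - 1))\<^sup>2 = s powr (q - 2) * s powr q"
  proof -
    have "(s powr (q - 1))\<^sup>2 = s powr ((q - 1) + (q - 1))"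
      by (subst powr_add) (simp add: power2_eq_square)
    also have "(q - 1) + (q - 1) = (q - 2) + q"
      by simp
    finally show ?thesis
      by (simp only: powr_add)
  qed
  have "(\<bar>a\<bar> powr q - \<bar>b\<bar> powr q)\<^sup>2 \<le> (q * s powr (q - 1) * \<bar>a - b\<bar>)\<^sup>2"
    using abs_powr_diff_le_max[of q a b] assms(3) unfolding s_def
    by (metis abs_ge_zero one_le_numeral order_trans power2_abs power_mono)
  also have "\<dots> = q\<^sup>2 * (a - b)\<^sup>2 * (s powr (q - 2) * s powr q)"
    by (simp add: power_mult_distrib flip: square)
  also have "\<dots> \<le> q\<^sup>2 * (a - b)\<^sup>2 * (H powr (q - 2) * (\<bar>a\<bar> powr q + \<bar>b\<bar> powr q))"
  proof (intro mult_left_mono mult_mono)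
    show "s powr (q - 2) \<le> H powr (q - 2)"
      using assms \<open>s > 0\<close> by (intro powr_mono2) (auto simp: s_def)
    show "s powr q \<le> \<bar>a\<bar> powr q + \<bar>b\<bar> powr q"
      by (simp add: s_def max_def)
  qed auto
  finally show ?thesis
    by (simp add: mult_ac)
qed

section \<open>Chaining\<close>

definition is_net :: "nat \<Rightarrow> ('t \<Rightarrow> nat \<Rightarrow> real) \<Rightarrow> real \<Rightarrow> 't set \<Rightarrow> 't set \<Rightarrow> bool" where
  "is_net m \<phi> \<delta> T N \<longleftrightarrow> N \<subseteq> T \<and> finite N \<and> (\<forall>t\<in>T. \<exists>s\<in>N. \<forall>j<m. \<bar>\<phi> t j - \<phi> s j\<bar> \<le> \<delta>)"

lemma SUP_abs_le_chain:
  fixes Z :: "'t \<Rightarrow> real" and \<pi> :: "nat \<Rightarrow> 't \<Rightarrow> 't"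
  assumes "T \<noteq> {}" "finite U" "\<And>l. finite (P l)"
    and "\<And>t. t \<in> T \<Longrightarrow> \<pi> 0 t \<in> U"
    and "\<And>t l. t \<in> T \<Longrightarrow> (\<pi> (Suc l) t, \<pi> l t) \<in> P l"
    and "\<And>t. t \<in> T \<Longrightarrow> \<bar>Z t - Z (\<pi> L t)\<bar> \<le> R"
  shows "(SUP t\<in>T. \<bar>Z t\<bar>)
           \<le> Max ((\<lambda>u. \<bar>Z u\<bar>) ` U) + (\<Sum>l<L. Max ((\<lambda>(u, v). \<bar>Z u - Z v\<bar>) ` P l)) + R"
proof (rule cSUP_least[OF assms(1)])
  fix t assume t: "t \<in> T"
  have "\<bar>Z t\<bar> \<le> \<bar>Z (\<pi> 0 t)\<bar> + (\<Sum>l<L. \<bar>Z (\<pi> (Suc l) t) - Z (\<pi> l t)\<bar>) + \<bar>Z t - Z (\<pi> L t)\<bar>"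
    using sum_abs[of "\<lambda>l. Z (\<pi> (Suc l) t) - Z (\<pi> l t)" "{..<L}"]
      sum_lessThan_telescope[of "\<lambda>l. Z (\<pi> l t)" L] by linarith
  also have "\<dots> \<le> Max ((\<lambda>u. \<bar>Z u\<bar>) ` U) + (\<Sum>l<L. Max ((\<lambda>(u, v). \<bar>Z u - Z v\<bar>) ` P l)) + R"
  proof (intro add_mono sum_mono)
    show "\<bar>Z (\<pi> 0 t)\<bar> \<le> Max ((\<lambda>u. \<bar>Z u\<bar>) ` U)"
      using assms(2,4) t by (intro Max_ge) auto
    show "\<bar>Z (\<pi> (Suc l) t) - Z (\<pi> l t)\<bar> \<le> Max ((\<lambda>(u, v). \<bar>Z u - Z v\<bar>) ` P l)" for l
      using assms(3,5) t by (intro Max_ge) (auto intro!: rev_image_eqI)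
  qed (use assms(6) t in auto)
  finally show "\<bar>Z t\<bar> \<le> Max ((\<lambda>u. \<bar>Z u\<bar>) ` U) + (\<Sum>l<L. Max ((\<lambda>(u, v). \<bar>Z u - Z v\<bar>) ` P l)) + R" .
qed

corollary rademacher_avg_SUP_abs_le_chain:
  fixes Z :: "(nat \<Rightarrow> real) \<Rightarrow> 't \<Rightarrow> real" and \<pi> :: "nat \<Rightarrow> 't \<Rightarrow> 't"
  assumes "T \<noteq> {}" "finite U" "\<And>l. finite (P l)"
    and "\<And>t. t \<in> T \<Longrightarrow> \<pi> 0 t \<in> U"
    and "\<And>t l. t \<in> T \<Longrightarrow> (\<pi> (Suc l) t, \<pi> l t) \<in> P l"
    and "\<And>\<epsilon> t. \<epsilon> \<in> signs m \<Longrightarrow> t \<in> T \<Longrightarrow> \<bar>Z \<epsilon> t - Z \<epsilon> (\<pi> L t)\<bar> \<le> R"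
  shows "rademacher_avg m (\<lambda>\<epsilon>. SUP t\<in>T. \<bar>Z \<epsilon> t\<bar>)
           \<le> rademacher_avg m (\<lambda>\<epsilon>. Max ((\<lambda>u. \<bar>Z \<epsilon> u\<bar>) ` U))
             + (\<Sum>l<L. rademacher_avg m (\<lambda>\<epsilon>. Max ((\<lambda>(u, v). \<bar>Z \<epsilon> u - Z \<epsilon> v\<bar>) ` P l))) + R"
proof -
  have "rademacher_avg m (\<lambda>\<epsilon>. SUP t\<in>T. \<bar>Z \<epsilon> t\<bar>)
          \<le> rademacher_avg m (\<lambda>\<epsilon>. Max ((\<lambda>u. \<bar>Z \<epsilon> u\<bar>) ` U)
               + (\<Sum>l<L. Max ((\<lambda>(u, v). \<bar>Z \<epsilon> u - Z \<epsilon> v\<bar>) ` P l)) + R)"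
    using assms by (intro rademacher_avg_mono SUP_abs_le_chain[where \<pi> = \<pi>]) auto
  thus ?thesis
    by (simp add: rademacher_avg_add rademacher_avg_sum)
qed

lemma sqrt_powr_mult:
  fixes H S q :: real
  assumes "0 \<le> H" "0 \<le> S"
  shows "sqrt (H powr q * S) = H powr (q / 2) * sqrt S"
  using assms by (simp add: real_sqrt_mult powr_half_sqrt_powr)

lemma rademacher_avg_Max_abs_powr_le:
  fixes \<phi> :: "'t \<Rightarrow> nat \<Rightarrow> real"
  assumes "finite U" "U \<noteq> {}" "card U \<le> 2 ^ k" "U \<subseteq> T" "0 \<le> q" "0 \<le> S" "0 \<le> H"
    and "\<And>t j. t \<in> T \<Longrightarrow> j < m \<Longrightarrow> \<bar>\<phi> t j\<bar> \<le> H"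
    and "\<And>t. t \<in> T \<Longrightarrow> (\<Sum>j<m. \<bar>\<phi> t j\<bar> powr q) \<le> S"
  shows "rademacher_avg m (\<lambda>\<epsilon>. Max ((\<lambda>u. \<bar>\<Sum>j<m. \<epsilon> j * \<bar>\<phi> u j\<bar> powr q\<bar>) ` U))
           \<le> H powr (q / 2) * sqrt S * sqrt (2 * (real k + 1))"
proof -
  have "rademacher_avg m (\<lambda>\<epsilon>. Max ((\<lambda>u. \<bar>\<Sum>j<m. \<epsilon> j * \<bar>\<phi> u j\<bar> powr q\<bar>) ` U))
           \<le> sqrt (H powr q * S) * sqrt (2 * (real k + 1))"
  proof (rule rademacher_avg_Max_abs_le_pow2)
    fix u assume "u \<in> U"
    hence u: "u \<in> T"
      using assms(4) by auto
    have "(\<Sum>j<m. (\<bar>\<phi> u j\<bar> powr q)\<^sup>2) \<le> (\<Sum>j<m. H powr q * \<bar>\<phi> u j\<bar> powr q)"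
    proof (rule sum_mono)
      fix j assume "j \<in> {..<m}"
      hence "\<bar>\<phi> u j\<bar> powr q \<le> H powr q"
        using assms(5,8) u by (intro powr_mono2) auto
      thus "(\<bar>\<phi> u j\<bar> powr q)\<^sup>2 \<le> H powr q * \<bar>\<phi> u j\<bar> powr q"
        by (simp add: power2_eq_square mult_right_mono)
    qed
    also have "\<dots> \<le> H powr q * S"
      using assms(9)[OF u] by (simp add: sum_distrib_left[symmetric] mult_left_mono)
    finally show "(\<Sum>j<m. (\<bar>\<phi> u j\<bar> powr q)\<^sup>2) \<le> (sqrt (H powr q * S))\<^sup>2"
      using assms(6) by simp
  qed (use assms in auto)
  thus ?thesis
    using assms(6,7) by (simp add: sqrt_powr_mult)
qed

lemma rademacher_avg_Max_abs_powr_diff_le: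
  fixes \<phi> :: "'t \<Rightarrow> nat \<Rightarrow> real"
  assumes "finite P" "P \<noteq> {}" "card P \<le> 2 ^ k" "P \<subseteq> T \<times> T" "2 \<le> q" "0 \<le> S" "0 < H" "0 \<le> r"
    and bound: "\<And>t j. t \<in> T \<Longrightarrow> j < m \<Longrightarrow> \<bar>\<phi> t j\<bar> \<le> H"
    and sum_bound: "\<And>t. t \<in> T \<Longrightarrow> (\<Sum>j<m. \<bar>\<phi> t j\<bar> powr q) \<le> S"
    and close: "\<And>u v j. (u, v) \<in> P \<Longrightarrow> j < m \<Longrightarrow> \<bar>\<phi> u j - \<phi> v j\<bar> \<le> r * H"
  shows "rademacher_avg m (\<lambda>\<epsilon>. Max ((\<lambda>(u, v).
             \<bar>(\<Sum>j<m. \<epsilon> j * \<bar>\<phi> u j\<bar> powr q) - (\<Sum>j<m. \<epsilon> j * \<bar>\<phi> v j\<bar> powr q)\<bar>) ` P))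
           \<le> 2 * r * q * H powr (q / 2) * sqrt S * sqrt (real k + 1)"
proof -
  define a where "a = (\<lambda>(u, v) j. \<bar>\<phi> u j\<bar> powr q - \<bar>\<phi> v j\<bar> powr q)"
  define \<sigma> where "\<sigma> = r * q * H powr (q / 2) * sqrt (2 * S)"
  have H_pow: "H\<^sup>2 * H powr (q - 2) = (H powr (q / 2))\<^sup>2"
  proof -
    have "H\<^sup>2 * H powr (q - 2) = H powr (2 + (q - 2))"
      using \<open>0 < H\<close> by (subst powr_add) (simp add: powr_numeral)
    also have "\<dots> = H powr (q / 2 + q / 2)"
      by simp
    finally show ?thesis
      by (simp only: powr_add power2_eq_square)
  qed
  have "(\<lambda>(u, v). \<bar>(\<Sum>j<m. \<epsilon> j * \<bar>\<phi> u j\<bar> powr q) - (\<Sum>j<m. \<epsilon> j * \<bar>\<phi> v j\<bar> powr q)\<bar>)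
          = (\<lambda>p. \<bar>\<Sum>j<m. \<epsilon> j * a p j\<bar>)" for \<epsilon>
    by (auto simp: a_def fun_eq_iff sum_subtractf right_diff_distrib)
  moreover have "rademacher_avg m (\<lambda>\<epsilon>. Max ((\<lambda>p. \<bar>\<Sum>j<m. \<epsilon> j * a p j\<bar>) ` P))
           \<le> \<sigma> * sqrt (2 * (real k + 1))"
  proof (rule rademacher_avg_Max_abs_le_pow2)
    fix p assume "p \<in> P"
    then obtain u v where p: "p = (u, v)" "(u, v) \<in> P" "u \<in> T" "v \<in> T"
      using assms(4) by (cases p) auto
    have "(\<Sum>j<m. (a p j)\<^sup>2) \<le> (\<Sum>j<m. q\<^sup>2 * (r * H)\<^sup>2 * H powr (q - 2) * (\<bar>\<phi> u j\<bar> powr q + \<bar>\<phi> v j\<bar> powr q))"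
    proof (rule sum_mono)
      fix j assume "j \<in> {..<m}"
      hence "(a p j)\<^sup>2 \<le> q\<^sup>2 * (\<phi> u j - \<phi> v j)\<^sup>2 * H powr (q - 2) * (\<bar>\<phi> u j\<bar> powr q + \<bar>\<phi> v j\<bar> powr q)"
        using p bound assms(5) by (auto simp: a_def intro!: abs_powr_diff_square_le)
      also have "\<dots> \<le> q\<^sup>2 * (r * H)\<^sup>2 * H powr (q - 2) * (\<bar>\<phi> u j\<bar> powr q + \<bar>\<phi> v j\<bar> powr q)"
      proof (intro mult_right_mono mult_left_mono)
        show "(\<phi> u j - \<phi> v j)\<^sup>2 \<le> (r * H)\<^sup>2"
          using close[OF p(2)] \<open>j \<in> {..<m}\<close> by (metis abs_ge_zero lessThan_iff power2_abs power_mono)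
      qed auto
      finally show "(a p j)\<^sup>2 \<le> q\<^sup>2 * (r * H)\<^sup>2 * H powr (q - 2) * (\<bar>\<phi> u j\<bar> powr q + \<bar>\<phi> v j\<bar> powr q)" .
    qed
    also have "\<dots> \<le> q\<^sup>2 * (r * H)\<^sup>2 * H powr (q - 2) * (2 * S)"
      using sum_bound[OF p(3)] sum_bound[OF p(4)]
      by (simp add: sum.distrib flip: sum_distrib_left) (intro mult_left_mono; simp)
    also have "\<dots> = \<sigma>\<^sup>2"
      using assms(6) H_pow by (simp add: \<sigma>_def power_mult_distrib)
    finally show "(\<Sum>j<m. (a p j)\<^sup>2) \<le> \<sigma>\<^sup>2" .
  qed (use assms in \<open>auto simp: \<sigma>_def\<close>)
  moreover have "\<sigma> * sqrt (2 * (real k + 1)) = 2 * r * q * H powr (q / 2) * sqrt S * sqrt (real k + 1)"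
    unfolding \<sigma>_def real_sqrt_mult[of 2] by (simp add: mult_ac)
  ultimately show ?thesis
    by simp
qed

lemma dyadic_projections:
  fixes \<phi> :: "'t \<Rightarrow> nat \<Rightarrow> real"
  assumes "0 < H"
    and nets: "\<And>\<delta>. 0 < \<delta> \<Longrightarrow> \<exists>N. is_net m \<phi> \<delta> T N \<and> real (card N) \<le> (1 + 2 * H / \<delta>) ^ n"
  obtains \<pi> where "\<And>l t. t \<in> T \<Longrightarrow> \<pi> l t \<in> T" "\<And>l. finite (\<pi> l ` T)"
    "\<And>l. card (\<pi> l ` T) \<le> 2 ^ ((l + 2) * n)"
    "\<And>l t j. t \<in> T \<Longrightarrow> j < m \<Longrightarrow> \<bar>\<phi> t j - \<phi> (\<pi> l t) j\<bar> \<le> H / 2 ^ l"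
proof -
  have "\<forall>l. \<exists>N. is_net m \<phi> (H / 2 ^ l) T N \<and> real (card N) \<le> (1 + 2 * H / (H / 2 ^ l)) ^ n"
    using \<open>0 < H\<close> by (intro allI nets) simp
  then obtain N where N: "\<And>l. is_net m \<phi> (H / 2 ^ l) T (N l)"
    "\<And>l. real (card (N l)) \<le> (1 + 2 * H / (H / 2 ^ l)) ^ n"
    by metis
  define \<pi> where "\<pi> l t = (SOME s. s \<in> N l \<and> (\<forall>j<m. \<bar>\<phi> t j - \<phi> s j\<bar> \<le> H / 2 ^ l))" for l t
  have \<pi>: "\<pi> l t \<in> N l \<and> (\<forall>j<m. \<bar>\<phi> t j - \<phi> (\<pi> l t) j\<bar> \<le> H / 2 ^ l)" if "t \<in> T" for l t
    unfolding \<pi>_def by (rule someI_ex) (use N(1)[of l] that in \<open>auto simp: is_net_def\<close>)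
  have card: "card (\<pi> l ` T) \<le> 2 ^ ((l + 2) * n)" for l
  proof -
    have "real (card (\<pi> l ` T)) \<le> real (card (N l))"
      using \<pi> N(1)[of l] by (auto simp: is_net_def intro!: card_mono)
    also have "\<dots> \<le> (1 + 2 ^ (l + 1)) ^ n"
      using N(2)[of l] \<open>0 < H\<close> by simp
    also have "\<dots> \<le> (2 ^ (l + 2)) ^ n"
      using one_le_power[of "2::real" "l + 1"] by (intro power_mono) simp_all
    also have "\<dots> = real (2 ^ ((l + 2) * n))"
      by (simp only: of_nat_power of_nat_numeral power_mult)
    finally show ?thesis
      by (simp only: of_nat_le_iff)
  qed
  have \<pi>_T: "\<pi> l t \<in> T" if "t \<in> T" for l t
    using \<pi>[OF that] N(1)[of l] by (auto simp: is_net_def)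
  have "finite (\<pi> l ` T)" for l
    using \<pi> N(1)[of l] by (auto simp: is_net_def intro: finite_subset)
  with \<pi> \<pi>_T card show ?thesis
    by (intro that[of \<pi>]) auto
qed

lemma dyadic_links:
  fixes \<pi> :: "nat \<Rightarrow> 't \<Rightarrow> 't" and \<phi> :: "'t \<Rightarrow> nat \<Rightarrow> real" and l :: nat
  assumes "\<And>l. finite (\<pi> l ` T)" "\<And>l. card (\<pi> l ` T) \<le> 2 ^ ((l + 2) * n)"
    and approx: "\<And>l t j. t \<in> T \<Longrightarrow> j < m \<Longrightarrow> \<bar>\<phi> t j - \<phi> (\<pi> l t) j\<bar> \<le> H / 2 ^ l"
  defines "P \<equiv> (\<lambda>t. (\<pi> (Suc l) t, \<pi> l t)) ` T"
  shows "finite P" "card P \<le> 2 ^ ((2 * l + 5) * n)"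
    and "\<And>u v j. (u, v) \<in> P \<Longrightarrow> j < m \<Longrightarrow> \<bar>\<phi> u j - \<phi> v j\<bar> \<le> 3 / 2 ^ Suc l * H"
proof -
  have P_sub: "P \<subseteq> \<pi> (Suc l) ` T \<times> \<pi> l ` T"
    by (auto simp: P_def)
  thus "finite P"
    using assms(1) by (meson finite_SigmaI finite_subset)
  have "card P \<le> card (\<pi> (Suc l) ` T) * card (\<pi> l ` T)"
    using P_sub assms(1) by (metis card_cartesian_product card_mono finite_SigmaI)
  also have "\<dots> \<le> 2 ^ ((Suc l + 2) * n) * 2 ^ ((l + 2) * n)"
    using assms(2) by (intro mult_le_mono)
  also have "\<dots> = 2 ^ ((2 * l + 5) * n)"
    by (simp add: algebra_simps flip: power_add)
  finally show "card P \<le> 2 ^ ((2 * l + 5) * n)" .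
  fix u v j assume uv: "(u, v) \<in> P" and j: "j < m"
  then obtain t where t: "t \<in> T" "u = \<pi> (Suc l) t" "v = \<pi> l t"
    by (auto simp: P_def)
  have "\<bar>\<phi> u j - \<phi> v j\<bar> \<le> \<bar>\<phi> t j - \<phi> u j\<bar> + \<bar>\<phi> t j - \<phi> v j\<bar>"
    by linarith
  also have "\<dots> \<le> H / 2 ^ Suc l + H / 2 ^ l"
    using approx[OF t(1) j, of "Suc l"] approx[OF t(1) j, of l] t(2,3) by (intro add_mono) simp_all
  finally show "\<bar>\<phi> u j - \<phi> v j\<bar> \<le> 3 / 2 ^ Suc l * H"
    by (simp add: field_simps)
qed

lemma sum_dyadic_weights_le: "(\<Sum>l<L. (real l + 3) / 2 ^ l) \<le> 8"
proof -
  have "(\<Sum>l<L. (real l + 3) / 2 ^ l) = 8 - (real L + 4) / 2 ^ L * 2"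
  proof (induction L)
    case (Suc L)
    have "(\<Sum>l<Suc L. (real l + 3) / 2 ^ l) = 8 - (real L + 4) / 2 ^ L * 2 + (real L + 3) / 2 ^ L"
      by (simp add: Suc.IH)
    also have "\<dots> = 8 - (real (Suc L) + 4) / 2 ^ Suc L * 2"
      by (simp add: field_simps)
    finally show ?case .
  qed simp
  thus ?thesis
    by simp
qed

lemma dyadic_level_factor_le:
  fixes l n :: nat
  assumes "1 \<le> n"
  shows "3 * sqrt ((2 * real l + 5) * n + 1) \<le> 5 * (real l + 3) * sqrt n"
proof (rule power2_le_imp_le)
  have "(3 * sqrt ((2 * real l + 5) * n + 1))\<^sup>2 = 9 * ((2 * real l + 5) * n + 1)"
    unfolding power_mult_distrib by simp
  also have "\<dots> \<le> 18 * (real l + 3) * n"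
    using assms by (simp add: algebra_simps)
  also have "\<dots> \<le> 25 * (real l + 3)\<^sup>2 * n"
  proof (intro mult_right_mono)
    have "18 * (real l + 3) \<le> (25 * (real l + 3)) * (real l + 3)"
      by (intro mult_right_mono) auto
    thus "18 * (real l + 3) \<le> 25 * (real l + 3)\<^sup>2"
      by (simp only: power2_eq_square mult.assoc)
  qed auto
  also have "\<dots> = (5 * (real l + 3) * sqrt n)\<^sup>2"
    unfolding power_mult_distrib by simp
  finally show "(3 * sqrt ((2 * real l + 5) * n + 1))\<^sup>2 \<le> (5 * (real l + 3) * sqrt n)\<^sup>2" .
qed simp

lemma rademacher_avg_Max_dyadic_net_le:
  fixes \<phi> :: "'t \<Rightarrow> nat \<Rightarrow> real" and n :: nat
  assumes "finite U" "U \<noteq> {}" "card U \<le> 2 ^ (2 * n)" "U \<subseteq> T" "2 \<le> q" "0 \<le> S" "0 \<le> H" "1 \<le> n"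
    and "\<And>t j. t \<in> T \<Longrightarrow> j < m \<Longrightarrow> \<bar>\<phi> t j\<bar> \<le> H"
    and "\<And>t. t \<in> T \<Longrightarrow> (\<Sum>j<m. \<bar>\<phi> t j\<bar> powr q) \<le> S"
  shows "rademacher_avg m (\<lambda>\<epsilon>. Max ((\<lambda>u. \<bar>\<Sum>j<m. \<epsilon> j * \<bar>\<phi> u j\<bar> powr q\<bar>) ` U))
           \<le> 2 * (q * H powr (q / 2) * sqrt S * sqrt n)"
proof -
  have "sqrt (2 * (real (2 * n) + 1)) \<le> 4 * sqrt n"
    by (rule power2_le_imp_le) (use \<open>1 \<le> n\<close> in \<open>simp_all add: power_mult_distrib\<close>)
  also have "\<dots> \<le> 2 * q * sqrt n"
    using \<open>2 \<le> q\<close> by (intro mult_right_mono) auto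
  finally have "H powr (q / 2) * sqrt S * sqrt (2 * (real (2 * n) + 1)) \<le> H powr (q / 2) * sqrt S * (2 * q * sqrt n)"
    using \<open>0 \<le> S\<close> by (intro mult_left_mono) auto
  moreover have "rademacher_avg m (\<lambda>\<epsilon>. Max ((\<lambda>u. \<bar>\<Sum>j<m. \<epsilon> j * \<bar>\<phi> u j\<bar> powr q\<bar>) ` U))
      \<le> H powr (q / 2) * sqrt S * sqrt (2 * (real (2 * n) + 1))"
    using assms by (intro rademacher_avg_Max_abs_powr_le[where T = T]) auto
  ultimately show ?thesis
    by (simp add: mult_ac)
qed

lemma rademacher_avg_Max_dyadic_link_le:
  fixes \<phi> :: "'t \<Rightarrow> nat \<Rightarrow> real" and l n :: nat
  assumes "finite P" "P \<noteq> {}" "card P \<le> 2 ^ ((2 * l + 5) * n)" "P \<subseteq> T \<times> T"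
    and "2 \<le> q" "0 \<le> S" "0 < H" "1 \<le> n"
    and "\<And>t j. t \<in> T \<Longrightarrow> j < m \<Longrightarrow> \<bar>\<phi> t j\<bar> \<le> H"
    and "\<And>t. t \<in> T \<Longrightarrow> (\<Sum>j<m. \<bar>\<phi> t j\<bar> powr q) \<le> S"
    and "\<And>u v j. (u, v) \<in> P \<Longrightarrow> j < m \<Longrightarrow> \<bar>\<phi> u j - \<phi> v j\<bar> \<le> 3 / 2 ^ Suc l * H"
  shows "rademacher_avg m (\<lambda>\<epsilon>. Max ((\<lambda>(u, v).
             \<bar>(\<Sum>j<m. \<epsilon> j * \<bar>\<phi> u j\<bar> powr q) - (\<Sum>j<m. \<epsilon> j * \<bar>\<phi> v j\<bar> powr q)\<bar>) ` P))
           \<le> 5 * (q * H powr (q / 2) * sqrt S * sqrt n) * ((real l + 3) / 2 ^ l)"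
proof -
  have "rademacher_avg m (\<lambda>\<epsilon>. Max ((\<lambda>(u, v).
             \<bar>(\<Sum>j<m. \<epsilon> j * \<bar>\<phi> u j\<bar> powr q) - (\<Sum>j<m. \<epsilon> j * \<bar>\<phi> v j\<bar> powr q)\<bar>) ` P))
          \<le> 2 * (3 / 2 ^ Suc l) * q * H powr (q / 2) * sqrt S * sqrt (real ((2 * l + 5) * n) + 1)"
    using assms by (intro rademacher_avg_Max_abs_powr_diff_le[where T = T]) auto
  also have "\<dots> = q * H powr (q / 2) * sqrt S * (3 * sqrt ((2 * real l + 5) * n + 1)) / 2 ^ l"
    by (simp add: field_simps)
  also have "\<dots> \<le> q * H powr (q / 2) * sqrt S * (5 * (real l + 3) * sqrt n) / 2 ^ l"
    using dyadic_level_factor_le[OF \<open>1 \<le> n\<close>, of l] \<open>0 \<le> S\<close> \<open>2 \<le> q\<close>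
    by (intro divide_right_mono mult_left_mono) auto
  also have "\<dots> = 5 * (q * H powr (q / 2) * sqrt S * sqrt n) * ((real l + 3) / 2 ^ l)"
    by (simp add: mult_ac)
  finally show ?thesis .
qed

lemma abs_rademacher_sum_powr_diff_le:
  assumes "\<epsilon> \<in> signs m" "1 \<le> q"
    and "\<And>j. j < m \<Longrightarrow> \<bar>a j\<bar> \<le> H" "\<And>j. j < m \<Longrightarrow> \<bar>b j\<bar> \<le> H" "\<And>j. j < m \<Longrightarrow> \<bar>a j - b j\<bar> \<le> \<delta>"
  shows "\<bar>(\<Sum>j<m. \<epsilon> j * \<bar>a j\<bar> powr q) - (\<Sum>j<m. \<epsilon> j * \<bar>b j\<bar> powr q)\<bar> \<le> m * (q * H powr (q - 1) * \<delta>)"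
proof -
  have "\<bar>(\<Sum>j<m. \<epsilon> j * \<bar>a j\<bar> powr q) - (\<Sum>j<m. \<epsilon> j * \<bar>b j\<bar> powr q)\<bar>
          = \<bar>\<Sum>j<m. \<epsilon> j * (\<bar>a j\<bar> powr q - \<bar>b j\<bar> powr q)\<bar>"
    by (simp add: sum_subtractf right_diff_distrib)
  also have "\<dots> \<le> (\<Sum>j<m. \<bar>\<bar>a j\<bar> powr q - \<bar>b j\<bar> powr q\<bar>)"
    using abs_sign[OF assms(1)] by (intro order_trans[OF sum_abs]) (simp add: abs_mult)
  also have "\<dots> \<le> (\<Sum>j<m. q * H powr (q - 1) * \<delta>)"
  proof (rule sum_mono)
    fix j assume "j \<in> {..<m}"
    hence "\<bar>\<bar>a j\<bar> powr q - \<bar>b j\<bar> powr q\<bar> \<le> q * H powr (q - 1) * \<bar>a j - b j\<bar>"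
      using assms by (intro abs_powr_diff_le) auto
    also have "\<dots> \<le> q * H powr (q - 1) * \<delta>"
      using assms(2,5) \<open>j \<in> {..<m}\<close> by (intro mult_left_mono) auto
    finally show "\<bar>\<bar>a j\<bar> powr q - \<bar>b j\<bar> powr q\<bar> \<le> q * H powr (q - 1) * \<delta>" .
  qed
  finally show ?thesis
    by simp
qed

text \<open>With \<open>K = q * H powr (q / 2) * sqrt S * sqrt n\<close>, the chain starts at an \<open>H\<close>-net costing
  \<open>2 * K\<close>, the links from scale \<open>H / 2 ^ l\<close> to \<open>H / 2 ^ Suc l\<close> cost \<open>5 * K * (l + 3) / 2 ^ l\<close>,
  and these weights sum to at most \<open>8\<close>: hence the constant \<open>42\<close>.\<close>
lemma rademacher_avg_SUP_abs_powr_le: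
  fixes T :: "'t set" and \<phi> :: "'t \<Rightarrow> nat \<Rightarrow> real" and n :: nat
  assumes "T \<noteq> {}" "2 \<le> q" "0 < H" "1 \<le> n"
    and bound: "\<And>t j. t \<in> T \<Longrightarrow> j < m \<Longrightarrow> \<bar>\<phi> t j\<bar> \<le> H"
    and sum_bound: "\<And>t. t \<in> T \<Longrightarrow> (\<Sum>j<m. \<bar>\<phi> t j\<bar> powr q) \<le> S"
    and nets: "\<And>\<delta>. 0 < \<delta> \<Longrightarrow> \<exists>N. is_net m \<phi> \<delta> T N \<and> real (card N) \<le> (1 + 2 * H / \<delta>) ^ n"
  shows "rademacher_avg m (\<lambda>\<epsilon>. SUP t\<in>T. \<bar>\<Sum>j<m. \<epsilon> j * \<bar>\<phi> t j\<bar> powr q\<bar>)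
           \<le> 42 * q * H powr (q / 2) * sqrt n * sqrt S"
proof -
  obtain \<pi> where \<pi>_T: "\<And>l t. t \<in> T \<Longrightarrow> \<pi> l t \<in> T" and finite_\<pi>: "\<And>l. finite (\<pi> l ` T)"
    and card_\<pi>: "\<And>l. card (\<pi> l ` T) \<le> 2 ^ ((l + 2) * n)"
    and approx: "\<And>l t j. t \<in> T \<Longrightarrow> j < m \<Longrightarrow> \<bar>\<phi> t j - \<phi> (\<pi> l t) j\<bar> \<le> H / 2 ^ l"
    using dyadic_projections[OF \<open>0 < H\<close> nets] by blast
  note links = dyadic_links[where \<pi> = \<pi> and \<phi> = \<phi> and T = T and m = m and H = H and n = n,
      OF finite_\<pi> card_\<pi> approx]
  define Z where "Z \<epsilon> t = (\<Sum>j<m. \<epsilon> j * \<bar>\<phi> t j\<bar> powr q)" for \<epsilon> t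
  define K where "K = q * H powr (q / 2) * sqrt S * sqrt n"
  define C where "C = m * (q * H powr (q - 1) * H)"
  have "0 \<le> S"
    using \<open>T \<noteq> {}\<close> sum_bound by (meson ex_in_conv order_trans powr_ge_zero sum_nonneg)
  hence "0 \<le> K"
    using \<open>2 \<le> q\<close> by (simp add: K_def)
  have tail: "\<bar>Z \<epsilon> t - Z \<epsilon> (\<pi> L t)\<bar> \<le> C / 2 ^ L" if "\<epsilon> \<in> signs m" "t \<in> T" for \<epsilon> t L
  proof -
    have "\<bar>Z \<epsilon> t - Z \<epsilon> (\<pi> L t)\<bar> \<le> m * (q * H powr (q - 1) * (H / 2 ^ L))"
      unfolding Z_def using that bound \<pi>_T approx \<open>2 \<le> q\<close> by (intro abs_rademacher_sum_powr_diff_le) auto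
    thus ?thesis
      by (simp add: C_def)
  qed
  have level0: "rademacher_avg m (\<lambda>\<epsilon>. Max ((\<lambda>u. \<bar>Z \<epsilon> u\<bar>) ` \<pi> 0 ` T)) \<le> 2 * K"
    unfolding Z_def K_def
  proof (rule rademacher_avg_Max_dyadic_net_le[where T = T])
    show "card (\<pi> 0 ` T) \<le> 2 ^ (2 * n)"
      using card_\<pi>[of 0] by (simp add: mult_2)
  qed (use \<open>T \<noteq> {}\<close> \<open>2 \<le> q\<close> \<open>0 < H\<close> \<open>1 \<le> n\<close> \<open>0 \<le> S\<close> \<pi>_T finite_\<pi> bound sum_bound in auto)
  have level: "rademacher_avg m (\<lambda>\<epsilon>. Max ((\<lambda>(u, v). \<bar>Z \<epsilon> u - Z \<epsilon> v\<bar>) ` (\<lambda>t. (\<pi> (Suc l) t, \<pi> l t)) ` T))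
                 \<le> 5 * K * ((real l + 3) / 2 ^ l)" for l
    unfolding Z_def K_def
    by (rule rademacher_avg_Max_dyadic_link_le[where T = T])
      (use \<open>T \<noteq> {}\<close> \<open>2 \<le> q\<close> \<open>0 < H\<close> \<open>1 \<le> n\<close> \<open>0 \<le> S\<close> \<pi>_T bound sum_bound links in auto)
  have truncated: "rademacher_avg m (\<lambda>\<epsilon>. SUP t\<in>T. \<bar>Z \<epsilon> t\<bar>) \<le> 42 * K + C / 2 ^ L" for L
  proof -
    have "rademacher_avg m (\<lambda>\<epsilon>. SUP t\<in>T. \<bar>Z \<epsilon> t\<bar>)
            \<le> rademacher_avg m (\<lambda>\<epsilon>. Max ((\<lambda>u. \<bar>Z \<epsilon> u\<bar>) ` \<pi> 0 ` T))
              + (\<Sum>l<L. rademacher_avg m (\<lambda>\<epsilon>. Max ((\<lambda>(u, v). \<bar>Z \<epsilon> u - Z \<epsilon> v\<bar>)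
                                                    ` (\<lambda>t. (\<pi> (Suc l) t, \<pi> l t)) ` T)))
              + C / 2 ^ L"
      using \<open>T \<noteq> {}\<close> finite_\<pi> links(1) tail by (intro rademacher_avg_SUP_abs_le_chain[where \<pi> = \<pi>]) auto
    also have "\<dots> \<le> 2 * K + (\<Sum>l<L. 5 * K * ((real l + 3) / 2 ^ l)) + C / 2 ^ L"
      using level0 level by (intro add_mono sum_mono order_refl)
    also have "(\<Sum>l<L. 5 * K * ((real l + 3) / 2 ^ l)) \<le> 5 * K * 8"
      unfolding sum_distrib_left[symmetric] using \<open>0 \<le> K\<close> by (intro mult_left_mono sum_dyadic_weights_le) simp
    finally show ?thesis
      by simp
  qed
  have "rademacher_avg m (\<lambda>\<epsilon>. SUP t\<in>T. \<bar>Z \<epsilon> t\<bar>) \<le> 42 * K"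
  proof (rule LIMSEQ_le_const)
    show "(\<lambda>L. 42 * K + C / 2 ^ L) \<longlonglongrightarrow> 42 * K"
      using tendsto_add[OF tendsto_const LIMSEQ_divide_realpow_zero[of 2 C]] by simp
  qed (use truncated in blast)
  thus ?thesis
    by (simp add: Z_def K_def mult_ac)
qed

section \<open>Volumetric covering numbers\<close>

lemma sets_borel_affine_preimage:
  fixes A :: "real set"
  assumes "A \<in> sets borel"
  shows "{t. (t - c) / r \<in> A} \<in> sets borel"
proof -
  have "(\<lambda>t::real. (t - c) / r) \<in> borel_measurable borel"
    by measurable
  from measurable_sets[OF this assms] show ?thesis
    by (simp add: vimage_def)
qed

lemma emeasure_lborel_affine_preimage:
  fixes A :: "real set" and c r :: real
  assumes "A \<in> sets borel" "0 < r"
  shows "emeasure lborel {t. (t - c) / r \<in> A} = ennreal r * emeasure lborel A"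
proof -
  let ?S = "{t. (t - c) / r \<in> A}"
  have S: "?S \<in> sets borel"
    using assms(1) by (rule sets_borel_affine_preimage)
  have "emeasure lborel ?S = emeasure (density (distr lborel borel (\<lambda>x. c + r * x)) (\<lambda>_. ennreal r)) ?S"
    using lborel_real_affine[of r c] assms(2) by simp
  also have "\<dots> = ennreal r * emeasure lborel ((\<lambda>x. c + r * x) -` ?S)"
    using S by (simp add: emeasure_density_const emeasure_distr)
  also have "(\<lambda>x. c + r * x) -` ?S = A"
    using assms(2) by auto
  finally show ?thesis .
qed

lemma emeasure_PiM_lborel_affine_preimage:
  fixes J :: "'i set" and p :: "'i \<Rightarrow> real"
  assumes J: "finite J" and "0 < r" and U: "U \<in> sets (PiM J (\<lambda>_. lborel))"
  shows "emeasure (PiM J (\<lambda>_. lborel)) {b \<in> space (PiM J (\<lambda>_. lborel)). restrict (\<lambda>k. (b k - p k) / r) J \<in> U}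
         = ennreal (r ^ card J) * emeasure (PiM J (\<lambda>_. lborel)) U"
proof -
  interpret product_sigma_finite "\<lambda>_. lborel :: real measure"
    by standard
  let ?M = "PiM J (\<lambda>_. lborel :: real measure)"
  define g where "g b = restrict (\<lambda>k. (b k - p k) / r) J" for b :: "'i \<Rightarrow> real"
  define c where "c = ennreal (1 / r ^ card J)"
  have g: "g \<in> ?M \<rightarrow>\<^sub>M ?M"
    unfolding g_def by measurable
  have eq: "density (distr ?M ?M g) (\<lambda>_. c) = ?M"
  proof (rule PiM_eqI[OF J])
    fix A :: "'i \<Rightarrow> real set" assume A: "\<And>i. i \<in> J \<Longrightarrow> A i \<in> sets lborel"
    have box: "Pi\<^sub>E J A \<in> sets ?M"
      using A J by (intro sets_PiM_I_finite) auto
    have "g -` Pi\<^sub>E J A \<inter> space ?M = Pi\<^sub>E J (\<lambda>k. {t. (t - p k) / r \<in> A k})"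
      by (auto simp: g_def space_PiM PiE_iff)
    moreover have "{t. (t - p k) / r \<in> A k} \<in> sets lborel" if "k \<in> J" for k
      using A[OF that] by (simp add: sets_borel_affine_preimage)
    ultimately have "emeasure (distr ?M ?M g) (Pi\<^sub>E J A) = (\<Prod>k\<in>J. ennreal r * emeasure lborel (A k))"
      using g box A J \<open>0 < r\<close>
      by (simp add: emeasure_distr emeasure_PiM emeasure_lborel_affine_preimage)
    also have "\<dots> = ennreal (r ^ card J) * (\<Prod>k\<in>J. emeasure lborel (A k))"
      using \<open>0 < r\<close> by (simp add: prod.distrib ennreal_power)
    finally show "emeasure (density (distr ?M ?M g) (\<lambda>_. c)) (Pi\<^sub>E J A) = (\<Prod>k\<in>J. emeasure lborel (A k))"
      using box \<open>0 < r\<close>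
      by (simp add: emeasure_density_const c_def mult.assoc[symmetric] ennreal_mult[symmetric])
  qed simp
  have "emeasure ?M {b \<in> space ?M. g b \<in> U} = emeasure (distr ?M ?M g) U"
    using g U by (subst emeasure_distr) (auto simp: vimage_def Int_def conj_commute)
  moreover have "emeasure ?M U = c * emeasure (distr ?M ?M g) U"
    using U by (subst (1) eq[symmetric]) (simp add: emeasure_density_const)
  ultimately show ?thesis
    using \<open>0 < r\<close> by (simp add: g_def c_def mult.assoc[symmetric] ennreal_mult[symmetric])
qed

text \<open>The open ball of radius \<open>r\<close> about \<open>p\<close> in \<open>\<real>\<^sup>J\<close> (extensional functions on \<open>J\<close>) for the
  seminorm \<open>a \<mapsto> max\<close> over \<open>j < m\<close> of \<open>\<bar>\<Sum>k\<in>J. a k * e k j\<bar>\<close>.  When \<open>a\<close> holds the values of a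
  function at the interpolation points and \<open>e\<close> the values of the Lagrange functions, this is the
  maximum of the function over the sample.\<close>
definition sample_ball :: "nat set \<Rightarrow> nat \<Rightarrow> (nat \<Rightarrow> nat \<Rightarrow> real) \<Rightarrow> (nat \<Rightarrow> real) \<Rightarrow> real \<Rightarrow> (nat \<Rightarrow> real) set" where
  "sample_ball J m e p r =
     {a \<in> space (PiM J (\<lambda>_. lborel)). \<forall>j<m. \<bar>\<Sum>k\<in>J. (a k - p k) * e k j\<bar> < r}"

lemma sets_sample_ball [measurable]:
  "finite J \<Longrightarrow> sample_ball J m e p r \<in> sets (PiM J (\<lambda>_. lborel))"
  unfolding sample_ball_def by measurable

lemma emeasure_sample_ball:
  assumes "finite J" "0 < r"
  shows "emeasure (PiM J (\<lambda>_. lborel)) (sample_ball J m e p r)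
           = ennreal (r ^ card J) * emeasure (PiM J (\<lambda>_. lborel)) (sample_ball J m e (\<lambda>_. 0) 1)"
proof -
  have "(\<Sum>k\<in>J. restrict (\<lambda>k. (b k - p k) / r) J k * e k j) = (\<Sum>k\<in>J. (b k - p k) * e k j) / r" for b j
    by (simp add: sum_divide_distrib)
  hence "sample_ball J m e p r = {b \<in> space (PiM J (\<lambda>_. lborel)).
           restrict (\<lambda>k. (b k - p k) / r) J \<in> sample_ball J m e (\<lambda>_. 0) 1}"
    using assms(2) by (auto simp: sample_ball_def space_PiM abs_divide)
  thus ?thesis
    using emeasure_PiM_lborel_affine_preimage[OF assms sets_sample_ball[OF assms(1)]] by simp
qed

lemma emeasure_PiM_lborel_cube:
  assumes "finite J" "0 < \<rho>"
  shows "emeasure (PiM J (\<lambda>_. lborel)) (PiE J (\<lambda>_. {-\<rho><..<\<rho>})) = ennreal ((2 * \<rho>) ^ card J)"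
proof -
  interpret product_sigma_finite "\<lambda>_. lborel :: real measure"
    by standard
  show ?thesis
    using assms by (simp add: emeasure_PiM ennreal_power)
qed

lemma sample_ball_subset_cube:
  assumes "J \<subseteq> {..<m}"
    and dirac: "\<And>k k'. k \<in> J \<Longrightarrow> k' \<in> J \<Longrightarrow> e k k' = (if k = k' then 1 else 0)"
  shows "sample_ball J m e (\<lambda>_. 0) 1 \<subseteq> PiE J (\<lambda>_. {-1<..<1})"
proof
  fix a assume a: "a \<in> sample_ball J m e (\<lambda>_. 0) 1"
  have "\<bar>a k\<bar> < 1" if "k \<in> J" for k
  proof -
    have "(\<Sum>k'\<in>J. (a k' - 0) * e k' k) = (\<Sum>k'\<in>J. if k' = k then a k' else 0)"
      using that by (intro sum.cong refl) (auto simp: dirac)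
    moreover have "\<bar>\<Sum>k'\<in>J. (a k' - 0) * e k' k\<bar> < 1"
      using a assms(1) that by (auto simp: sample_ball_def)
    moreover have "finite J"
      using assms(1) by (rule finite_subset) simp
    ultimately show ?thesis
      using that by simp
  qed
  thus "a \<in> PiE J (\<lambda>_. {-1<..<1})"
    using a by (auto simp: sample_ball_def space_PiM PiE_iff abs_less_iff)
qed

lemma cube_subset_sample_ball:
  obtains \<rho> :: real where "0 < \<rho>" "PiE J (\<lambda>_. {-\<rho><..<\<rho>}) \<subseteq> sample_ball J m e (\<lambda>_. 0) 1"
proof -
  define E where "E = (\<Sum>k\<in>J. \<Sum>j<m. \<bar>e k j\<bar>)"
  define \<rho> where "\<rho> = 1 / (1 + E)"
  have "0 \<le> E"
    unfolding E_def by (intro sum_nonneg) auto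
  hence \<rho>: "0 < \<rho>" "\<rho> * E < 1"
    by (simp_all add: \<rho>_def field_simps)
  have "PiE J (\<lambda>_. {-\<rho><..<\<rho>}) \<subseteq> sample_ball J m e (\<lambda>_. 0) 1"
  proof
    fix a assume a: "a \<in> PiE J (\<lambda>_. {-\<rho><..<\<rho>})"
    have "\<bar>\<Sum>k\<in>J. (a k - 0) * e k j\<bar> < 1" if "j < m" for j
    proof -
      have "\<bar>\<Sum>k\<in>J. (a k - 0) * e k j\<bar> \<le> (\<Sum>k\<in>J. \<bar>a k\<bar> * \<bar>e k j\<bar>)"
        by (rule order_trans[OF sum_abs]) (simp add: abs_mult)
      also have "\<dots> \<le> (\<Sum>k\<in>J. \<rho> * \<bar>e k j\<bar>)"
        using a by (intro sum_mono mult_right_mono) (auto simp: PiE_iff)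
      also have "\<dots> \<le> \<rho> * E"
        unfolding E_def sum_distrib_left[symmetric] using that \<rho>(1)
        by (intro mult_left_mono sum_mono member_le_sum) auto
      finally show ?thesis
        using \<rho>(2) by linarith
    qed
    thus "a \<in> sample_ball J m e (\<lambda>_. 0) 1"
      using a by (auto simp: sample_ball_def space_PiM PiE_iff)
  qed
  with \<rho>(1) show ?thesis
    by (rule that)
qed

lemma emeasure_unit_sample_ball:
  assumes J: "finite J" "J \<subseteq> {..<m}"
    and dirac: "\<And>k k'. k \<in> J \<Longrightarrow> k' \<in> J \<Longrightarrow> e k k' = (if k = k' then 1 else 0)"
  obtains v where "0 < v" "emeasure (PiM J (\<lambda>_. lborel)) (sample_ball J m e (\<lambda>_. 0) 1) = ennreal v"
proof -
  let ?M = "PiM J (\<lambda>_. lborel :: real measure)" and ?B = "sample_ball J m e (\<lambda>_. 0) 1"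
  have "emeasure ?M ?B \<le> emeasure ?M (PiE J (\<lambda>_. {-1<..<1}))"
    using J sample_ball_subset_cube[OF J(2) dirac] by (intro emeasure_mono sets_PiM_I_finite) auto
  hence upper: "emeasure ?M ?B \<le> ennreal (2 ^ card J)"
    using emeasure_PiM_lborel_cube[OF J(1), of 1] by simp
  obtain \<rho> :: real where \<rho>: "0 < \<rho>" "PiE J (\<lambda>_. {-\<rho><..<\<rho>}) \<subseteq> ?B"
    by (rule cube_subset_sample_ball)
  hence "emeasure ?M (PiE J (\<lambda>_. {-\<rho><..<\<rho>})) \<le> emeasure ?M ?B"
    using J by (intro emeasure_mono sets_sample_ball)
  hence lower: "ennreal ((2 * \<rho>) ^ card J) \<le> emeasure ?M ?B"
    using emeasure_PiM_lborel_cube[OF J(1) \<rho>(1)] by simp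
  obtain v where v: "emeasure ?M ?B = ennreal v" "0 \<le> v"
    using upper by (cases "emeasure ?M ?B" rule: ennreal_cases) (auto simp: top_unique)
  hence "(2 * \<rho>) ^ card J \<le> v"
    using lower by simp
  moreover have "0 < (2 * \<rho>) ^ card J"
    using \<rho>(1) by simp
  ultimately have "0 < v"
    by linarith
  thus ?thesis
    using v(1) by (rule that)
qed

lemma card_mult_le_of_disjoint_family:
  fixes B :: "'i \<Rightarrow> 'a set" and b c :: real
  assumes "finite P" "disjoint_family_on B P" "\<And>p. p \<in> P \<Longrightarrow> B p \<in> sets M"
    and "(\<Union>p\<in>P. B p) \<subseteq> C" "C \<in> sets M"
    and "\<And>p. p \<in> P \<Longrightarrow> emeasure M (B p) = ennreal b" "emeasure M C = ennreal c" "0 \<le> b" "0 \<le> c"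
  shows "card P * b \<le> c"
proof -
  have "ennreal (card P * b) = (\<Sum>p\<in>P. emeasure M (B p))"
    using assms(6,8) by (simp add: ennreal_mult ennreal_of_nat_eq_real_of_nat)
  also have "\<dots> = emeasure M (\<Union>p\<in>P. B p)"
    using assms(1-3) by (intro sum_emeasure) auto
  also have "\<dots> \<le> emeasure M C"
    using assms(4,5) by (rule emeasure_mono)
  finally show ?thesis
    using assms(7,9) by simp
qed

lemma disjoint_family_on_sample_ball:
  assumes "pairwise (\<lambda>a b. \<exists>j<m. \<delta> \<le> \<bar>\<Sum>k\<in>J. (a k - b k) * e k j\<bar>) P"
  shows "disjoint_family_on (\<lambda>a. sample_ball J m e a (\<delta> / 2)) P"
  unfolding disjoint_family_on_def
proof (intro ballI impI, rule ccontr)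
  fix a b assume ab: "a \<in> P" "b \<in> P" "a \<noteq> b"
    and "sample_ball J m e a (\<delta> / 2) \<inter> sample_ball J m e b (\<delta> / 2) \<noteq> {}"
  moreover obtain j where j: "j < m" "\<delta> \<le> \<bar>\<Sum>k\<in>J. (a k - b k) * e k j\<bar>"
    using assms ab by (auto simp: pairwise_def)
  ultimately obtain c where "\<bar>\<Sum>k\<in>J. (c k - a k) * e k j\<bar> < \<delta> / 2" "\<bar>\<Sum>k\<in>J. (c k - b k) * e k j\<bar> < \<delta> / 2"
    by (auto simp: sample_ball_def)
  moreover have "(\<Sum>k\<in>J. (a k - b k) * e k j) = (\<Sum>k\<in>J. (c k - b k) * e k j) - (\<Sum>k\<in>J. (c k - a k) * e k j)"
    by (simp add: algebra_simps flip: sum_subtractf)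
  ultimately show False
    using j(2) by linarith
qed

lemma sample_ball_subset:
  assumes "c \<in> sample_ball J m e a r" "\<And>j. j < m \<Longrightarrow> \<bar>\<Sum>k\<in>J. a k * e k j\<bar> \<le> H"
  shows "c \<in> sample_ball J m e (\<lambda>_. 0) (H + r)"
proof -
  have "\<bar>\<Sum>k\<in>J. (c k - 0) * e k j\<bar> < H + r" if "j < m" for j
  proof -
    have "\<bar>\<Sum>k\<in>J. (c k - 0) * e k j\<bar> = \<bar>(\<Sum>k\<in>J. (c k - a k) * e k j) + (\<Sum>k\<in>J. a k * e k j)\<bar>"
      by (simp add: algebra_simps flip: sum.distrib)
    also have "\<dots> \<le> \<bar>\<Sum>k\<in>J. (c k - a k) * e k j\<bar> + \<bar>\<Sum>k\<in>J. a k * e k j\<bar>"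
      by (rule abs_triangle_ineq)
    also have "\<dots> < r + H"
      using assms that by (intro add_less_le_mono) (auto simp: sample_ball_def)
    finally show ?thesis
      by simp
  qed
  thus ?thesis
    using assms(1) by (auto simp: sample_ball_def)
qed

text \<open>Volume argument: the balls of radius \<open>\<delta>/2\<close> about a \<open>\<delta>\<close>-separated set are disjoint and lie
  in the ball of radius \<open>H + \<delta>/2\<close>, and volumes scale like \<open>r ^ card J\<close>.\<close>
lemma card_separated_le:
  fixes J :: "nat set"
  assumes J: "finite J" "J \<subseteq> {..<m}"
    and dirac: "\<And>k k'. k \<in> J \<Longrightarrow> k' \<in> J \<Longrightarrow> e k k' = (if k = k' then 1 else 0)"
    and P: "finite P" "P \<subseteq> space (PiM J (\<lambda>_. lborel))"
    and bound: "\<And>a j. a \<in> P \<Longrightarrow> j < m \<Longrightarrow> \<bar>\<Sum>k\<in>J. a k * e k j\<bar> \<le> H"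
    and sep: "pairwise (\<lambda>a b. \<exists>j<m. \<delta> \<le> \<bar>\<Sum>k\<in>J. (a k - b k) * e k j\<bar>) P"
    and "0 < \<delta>" "0 \<le> H"
  shows "real (card P) \<le> (1 + 2 * H / \<delta>) ^ card J"
proof -
  let ?M = "PiM J (\<lambda>_. lborel :: real measure)" and ?ball = "sample_ball J m e"
  obtain v where v: "0 < v" "emeasure ?M (?ball (\<lambda>_. 0) 1) = ennreal v"
    using emeasure_unit_sample_ball[OF J dirac] by blast
  have ball: "emeasure ?M (?ball p r) = ennreal (r ^ card J * v)" if "0 < r" for p r
    using emeasure_sample_ball[OF J(1) that, of m e p] v that by (simp add: ennreal_mult)
  have "card P * ((\<delta> / 2) ^ card J * v) \<le> (H + \<delta> / 2) ^ card J * v"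
  proof (rule card_mult_le_of_disjoint_family[where M = ?M])
    show "(\<Union>a\<in>P. ?ball a (\<delta> / 2)) \<subseteq> ?ball (\<lambda>_. 0) (H + \<delta> / 2)"
      using bound by (blast intro: sample_ball_subset)
  qed (use P(1) sep disjoint_family_on_sample_ball sets_sample_ball[OF J(1)] ball \<open>0 < \<delta>\<close> \<open>0 \<le> H\<close> v(1)
       in auto)
  hence "card P * (\<delta> / 2) ^ card J \<le> (H + \<delta> / 2) ^ card J"
    using v(1) by (simp add: mult.assoc[symmetric])
  hence "card P \<le> (H + \<delta> / 2) ^ card J / (\<delta> / 2) ^ card J"
    using \<open>0 < \<delta>\<close> by (subst pos_le_divide_eq) auto
  also have "\<dots> = ((H + \<delta> / 2) / (\<delta> / 2)) ^ card J"
    by (rule power_divide[symmetric])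
  also have "(H + \<delta> / 2) / (\<delta> / 2) = 1 + 2 * H / \<delta>"
    using \<open>0 < \<delta>\<close> by (simp add: field_simps)
  finally show ?thesis .
qed

text \<open>The net is a separated set of maximal cardinality.\<close>
lemma obtain_separated_net:
  fixes close :: "'a \<Rightarrow> 'a \<Rightarrow> bool"
  assumes refl: "\<And>a. a \<in> Y \<Longrightarrow> close a a" and sym: "\<And>a b. close a b \<Longrightarrow> close b a"
    and bounded: "\<And>Q. Q \<subseteq> Y \<Longrightarrow> finite Q \<Longrightarrow> pairwise (\<lambda>a b. \<not> close a b) Q \<Longrightarrow> card Q \<le> B"
  obtains N where "N \<subseteq> Y" "finite N" "pairwise (\<lambda>a b. \<not> close a b) N" "\<And>a. a \<in> Y \<Longrightarrow> \<exists>b\<in>N. close a b"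
proof -
  define sep where "sep Q \<longleftrightarrow> Q \<subseteq> Y \<and> finite Q \<and> pairwise (\<lambda>a b. \<not> close a b) Q" for Q
  have "\<exists>N. sep N \<and> (\<forall>Q. sep Q \<longrightarrow> card Q \<le> card N)"
    by (rule ex_has_greatest_nat[where k = "{}" and b = "Suc B"])
      (auto simp: sep_def bounded less_Suc_eq_le)
  then obtain N where N: "sep N" and max: "\<And>Q. sep Q \<Longrightarrow> card Q \<le> card N"
    by blast
  have "\<exists>b\<in>N. close a b" if a: "a \<in> Y" for a
  proof (rule ccontr)
    assume far: "\<not> (\<exists>b\<in>N. close a b)"
    hence "a \<notin> N"
      using refl[OF a] by blast
    moreover have "sep (insert a N)"
      using N a far sym by (auto simp: sep_def pairwise_insert)
    ultimately have "Suc (card N) \<le> card N"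
      using max[of "insert a N"] N by (simp add: sep_def)
    thus False
      by simp
  qed
  with N show ?thesis
    by (intro that[of N]) (auto simp: sep_def)
qed

lemma card_separated_interpolation_le:
  fixes \<phi> :: "'t \<Rightarrow> nat \<Rightarrow> real"
  assumes J: "finite J" "J \<subseteq> {..<m}"
    and dirac: "\<And>k k'. k \<in> J \<Longrightarrow> k' \<in> J \<Longrightarrow> e k k' = (if k = k' then 1 else 0)"
    and repr: "\<And>t j. t \<in> T \<Longrightarrow> j < m \<Longrightarrow> \<phi> t j = (\<Sum>k\<in>J. \<phi> t k * e k j)"
    and bound: "\<And>t j. t \<in> T \<Longrightarrow> j < m \<Longrightarrow> \<bar>\<phi> t j\<bar> \<le> H"
    and "0 < \<delta>" "0 \<le> H"
    and Q: "Q \<subseteq> T" "finite Q" "pairwise (\<lambda>s t. \<exists>j<m. \<delta> \<le> \<bar>\<phi> s j - \<phi> t j\<bar>) Q"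
  shows "real (card Q) \<le> (1 + 2 * H / \<delta>) ^ card J"
proof -
  define coord where "coord t = restrict (\<phi> t) J" for t
  have coord_sum: "(\<Sum>k\<in>J. coord t k * e k j) = \<phi> t j" if "t \<in> T" "j < m" for t j
    using repr[OF that] by (simp add: coord_def)
  have coord_diff: "(\<Sum>k\<in>J. (coord s k - coord t k) * e k j) = \<phi> s j - \<phi> t j"
    if "s \<in> T" "t \<in> T" "j < m" for s t j
    using coord_sum[OF that(1,3)] coord_sum[OF that(2,3)] by (simp add: left_diff_distrib sum_subtractf)
  have "inj_on coord Q"
  proof (rule inj_onI, rule ccontr)
    fix s t assume st: "s \<in> Q" "t \<in> Q" "coord s = coord t" "s \<noteq> t"
    then obtain j where "j < m" "\<delta> \<le> \<bar>\<phi> s j - \<phi> t j\<bar>"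
      using Q(3) by (auto simp: pairwise_def)
    thus False
      using coord_diff[of s t j] st Q(1) \<open>0 < \<delta>\<close> by (auto simp: subset_iff)
  qed
  moreover have "real (card (coord ` Q)) \<le> (1 + 2 * H / \<delta>) ^ card J"
  proof (rule card_separated_le[OF J dirac])
    show "pairwise (\<lambda>a b. \<exists>j<m. \<delta> \<le> \<bar>\<Sum>k\<in>J. (a k - b k) * e k j\<bar>) (coord ` Q)"
    proof (rule pairwiseI)
      fix a b assume "a \<in> coord ` Q" "b \<in> coord ` Q" "a \<noteq> b"
      then obtain s t where st: "s \<in> Q" "t \<in> Q" "s \<noteq> t" "a = coord s" "b = coord t"
        by blast
      then obtain j where "j < m" "\<delta> \<le> \<bar>\<phi> s j - \<phi> t j\<bar>"
        using Q(3) by (auto simp: pairwise_def)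
      thus "\<exists>j<m. \<delta> \<le> \<bar>\<Sum>k\<in>J. (a k - b k) * e k j\<bar>"
        using coord_diff[of s t j] st Q(1) by (intro exI[of _ j]) (auto simp: subset_iff)
    qed
  qed (use Q coord_sum bound \<open>0 < \<delta>\<close> \<open>0 \<le> H\<close> in \<open>auto simp: coord_def space_PiM\<close>)
  ultimately show ?thesis
    by (simp add: card_image)
qed

lemma exists_net_of_interpolation:
  fixes \<phi> :: "'t \<Rightarrow> nat \<Rightarrow> real"
  assumes J: "finite J" "J \<subseteq> {..<m}"
    and dirac: "\<And>k k'. k \<in> J \<Longrightarrow> k' \<in> J \<Longrightarrow> e k k' = (if k = k' then 1 else 0)"
    and repr: "\<And>t j. t \<in> T \<Longrightarrow> j < m \<Longrightarrow> \<phi> t j = (\<Sum>k\<in>J. \<phi> t k * e k j)"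
    and bound: "\<And>t j. t \<in> T \<Longrightarrow> j < m \<Longrightarrow> \<bar>\<phi> t j\<bar> \<le> H"
    and "0 < \<delta>" "0 \<le> H"
  shows "\<exists>N. is_net m \<phi> \<delta> T N \<and> real (card N) \<le> (1 + 2 * H / \<delta>) ^ card J"
proof -
  define close where "close s t \<longleftrightarrow> (\<forall>j<m. \<bar>\<phi> s j - \<phi> t j\<bar> < \<delta>)" for s t
  have packing: "real (card Q) \<le> (1 + 2 * H / \<delta>) ^ card J"
    if "Q \<subseteq> T" "finite Q" "pairwise (\<lambda>s t. \<not> close s t) Q" for Q
    using card_separated_interpolation_le[OF assms] that by (simp add: close_def not_less)
  obtain N where N: "N \<subseteq> T" "finite N" "pairwise (\<lambda>s t. \<not> close s t) N"
    and net: "\<And>t. t \<in> T \<Longrightarrow> \<exists>s\<in>N. close t s"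
  proof (rule obtain_separated_net[where B = "nat \<lceil>(1 + 2 * H / \<delta>) ^ card J\<rceil>"])
    fix Q assume "Q \<subseteq> T" "finite Q" "pairwise (\<lambda>s t. \<not> close s t) Q"
    hence "real (card Q) \<le> real_of_int \<lceil>(1 + 2 * H / \<delta>) ^ card J\<rceil>"
      using packing by (meson le_of_int_ceiling order_trans)
    thus "card Q \<le> nat \<lceil>(1 + 2 * H / \<delta>) ^ card J\<rceil>"
      by linarith
  qed (use \<open>0 < \<delta>\<close> in \<open>auto simp: close_def abs_minus_commute\<close>)
  have "is_net m \<phi> \<delta> T N"
    unfolding is_net_def
  proof (intro conjI ballI)
    fix t assume "t \<in> T"
    then obtain s where "s \<in> N" "close t s"
      using net by blast
    thus "\<exists>s\<in>N. \<forall>j<m. \<bar>\<phi> t j - \<phi> s j\<bar> \<le> \<delta>"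
      unfolding close_def by (meson less_imp_le)
  qed (use N in auto)
  with packing[OF N] show ?thesis
    by blast
qed

section \<open>Interpolation points\<close>

lemma sum_fun_apply: "(\<Sum>a\<in>A. f a) y = (\<Sum>a\<in>A. (f a y :: real))"
  by (induction A rule: infinite_finite_induct) (auto simp: plus_fun_apply zero_fun_apply)

lemma (in vector_space) card_le_dim_if_independent:
  assumes "finite B" "span B = X" "D \<subseteq> X" "independent D"
  shows "card D \<le> dim X"
proof -
  obtain Bs where Bs: "Bs \<subseteq> X" "independent Bs" "X \<subseteq> span Bs" "card Bs = dim X"
    by (rule basis_exists)
  have "finite Bs"
    using independent_span_bound[OF assms(1) Bs(2)] Bs(1) assms(2) by auto
  thus ?thesis
    using independent_span_bound[OF _ assms(4)] assms(3) Bs(3,4) by fastforce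
qed

lemma independent_dual_family:
  fixes d :: "nat \<Rightarrow> 'a \<Rightarrow> real"
  assumes dual: "\<And>k k'. k \<in> J \<Longrightarrow> k' \<in> J \<Longrightarrow> d k (x k') = (if k = k' then 1 else 0)"
  shows "inj_on d J" "\<not> module.dependent fscale (d ` J)"
proof -
  interpret V: vector_space fscale
    by (rule vector_space_fscale)
  show "inj_on d J"
    by (rule inj_onI) (metis dual zero_neq_one)
  show "V.independent (d ` J)"
    unfolding V.dependent_explicit
  proof clarify
    fix t u v assume t: "finite t" "t \<subseteq> d ` J" "(\<Sum>v\<in>t. fscale (u v) v) = 0" and "v \<in> t" "u v \<noteq> 0"
    obtain k where k: "k \<in> J" "v = d k"
      using t(2) \<open>v \<in> t\<close> by blast
    have "0 = (\<Sum>w\<in>t. u w * w (x k))"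
      using fun_cong[OF t(3), of "x k"] by (simp add: sum_fun_apply fscale_def zero_fun_apply)
    also have "\<dots> = (\<Sum>w\<in>t. if w = v then u w else 0)"
    proof (rule sum.cong[OF refl])
      fix w assume "w \<in> t"
      then obtain k' where "k' \<in> J" "w = d k'"
        using t(2) by blast
      thus "u w * w (x k) = (if w = v then u w else 0)"
        using dual[OF \<open>k' \<in> J\<close> k(1)] dual[OF k(1) k(1)] k by auto
    qed
    also have "\<dots> = u v"
      using t(1) \<open>v \<in> t\<close> by simp
    finally show False
      using \<open>u v \<noteq> 0\<close> by simp
  qed
qed

text \<open>Take \<open>J\<close> of minimal cardinality such that every \<open>f \<in> X\<close> vanishing at the points \<open>x k\<close>,
  \<open>k \<in> J\<close>, vanishes at all sample points; minimality yields the Lagrange functions \<open>d k\<close>.\<close>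
lemma exists_determining_dual_family:
  fixes X :: "('a \<Rightarrow> real) set" and x :: "nat \<Rightarrow> 'a"
  assumes "module.subspace fscale X"
  obtains J d where "J \<subseteq> {..<m}" "\<And>k. k \<in> J \<Longrightarrow> d k \<in> X"
    "\<And>k k'. k \<in> J \<Longrightarrow> k' \<in> J \<Longrightarrow> d k (x k') = (if k = k' then 1 else 0)"
    "\<forall>f\<in>X. (\<forall>k\<in>J. f (x k) = 0) \<longrightarrow> (\<forall>j<m. f (x j) = 0)"
proof -
  interpret V: vector_space fscale
    by (rule vector_space_fscale)
  define determining where
    "determining J \<longleftrightarrow> J \<subseteq> {..<m} \<and> (\<forall>f\<in>X. (\<forall>k\<in>J. f (x k) = 0) \<longrightarrow> (\<forall>j<m. f (x j) = 0))" for J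
  have "determining {..<m}"
    by (auto simp: determining_def)
  then obtain J where J: "determining J" and minimal: "\<And>J'. determining J' \<Longrightarrow> card J \<le> card J'"
    using ex_has_least_nat[of determining "{..<m}" card] by blast
  hence "finite J"
    by (auto simp: determining_def intro: finite_subset)
  have "\<exists>g\<in>X. g (x k) = 1 \<and> (\<forall>k'\<in>J. k' \<noteq> k \<longrightarrow> g (x k') = 0)" if k: "k \<in> J" for k
  proof -
    have "\<not> determining (J - {k})"
      using minimal card_Diff1_less[OF \<open>finite J\<close> k] by (meson not_le)
    then obtain f where f: "f \<in> X" "\<forall>k'\<in>J - {k}. f (x k') = 0" "\<exists>j<m. f (x j) \<noteq> 0"
      using J by (auto simp: determining_def)
    hence "f (x k) \<noteq> 0"
      using J by (auto simp: determining_def)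
    moreover have "fscale (1 / f (x k)) f \<in> X"
      using V.subspace_scale[OF assms f(1)] .
    ultimately show ?thesis
      using f(2) by (intro bexI[of _ "fscale (1 / f (x k)) f"]) (auto simp: fscale_def)
  qed
  then obtain d where "\<And>k. k \<in> J \<Longrightarrow> d k \<in> X \<and> d k (x k) = 1 \<and> (\<forall>k'\<in>J. k' \<noteq> k \<longrightarrow> d k (x k') = 0)"
    by metis
  with J show ?thesis
    by (intro that[of J d]) (auto simp: determining_def)
qed

lemma interpolation_formula:
  fixes X :: "('a \<Rightarrow> real) set" and x :: "nat \<Rightarrow> 'a"
  assumes "module.subspace fscale X" "finite J" "\<And>k. k \<in> J \<Longrightarrow> d k \<in> X"
    and dual: "\<And>k k'. k \<in> J \<Longrightarrow> k' \<in> J \<Longrightarrow> d k (x k') = (if k = k' then 1 else 0)"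
    and determining: "\<forall>g\<in>X. (\<forall>k\<in>J. g (x k) = 0) \<longrightarrow> (\<forall>j<m. g (x j) = 0)"
    and "f \<in> X" "j < m"
  shows "f (x j) = (\<Sum>k\<in>J. f (x k) * d k (x j))"
proof -
  interpret V: vector_space fscale
    by (rule vector_space_fscale)
  define g where "g = f - (\<Sum>k\<in>J. fscale (f (x k)) (d k))"
  have g_apply: "g y = f y - (\<Sum>k\<in>J. f (x k) * d k y)" for y
    by (simp add: g_def fun_diff_def sum_fun_apply fscale_def)
  have "g \<in> X"
    unfolding g_def using assms(1,3,6)
    by (intro V.subspace_diff V.subspace_sum V.subspace_scale) auto
  moreover have "g (x k') = 0" if "k' \<in> J" for k'
  proof -
    have "(\<Sum>k\<in>J. f (x k) * d k (x k')) = (\<Sum>k\<in>J. if k = k' then f (x k) else 0)"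
      using dual that by (intro sum.cong refl) auto
    thus ?thesis
      using assms(2) that by (simp add: g_apply)
  qed
  ultimately have "g (x j) = 0"
    using determining \<open>j < m\<close> by blast
  thus ?thesis
    by (simp add: g_apply)
qed

lemma exists_interpolation_points:
  fixes X :: "('a \<Rightarrow> real) set" and x :: "nat \<Rightarrow> 'a"
  assumes "module.subspace fscale X" "finite B" "module.span fscale B = X"
  obtains J d where "J \<subseteq> {..<m}" "card J \<le> vector_space.dim fscale X"
    "\<And>k k'. k \<in> J \<Longrightarrow> k' \<in> J \<Longrightarrow> d k (x k') = (if k = k' then 1 else 0)"
    "\<And>f j. f \<in> X \<Longrightarrow> j < m \<Longrightarrow> f (x j) = (\<Sum>k\<in>J. f (x k) * d k (x j))"
proof -
  interpret V: vector_space fscale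
    by (rule vector_space_fscale)
  obtain J d where J: "J \<subseteq> {..<m}" and d: "\<And>k. k \<in> J \<Longrightarrow> d k \<in> X"
    and dual: "\<And>k k'. k \<in> J \<Longrightarrow> k' \<in> J \<Longrightarrow> d k (x k') = (if k = k' then 1 else 0)"
    and determining: "\<forall>f\<in>X. (\<forall>k\<in>J. f (x k) = 0) \<longrightarrow> (\<forall>j<m. f (x j) = 0)"
    using exists_determining_dual_family[OF assms(1)] by blast
  have "finite J"
    using J by (rule finite_subset) simp
  have "card J = card (d ` J)"
    using independent_dual_family(1)[where x = x, OF dual] by (simp add: card_image)
  also have "\<dots> \<le> V.dim X"
    using d independent_dual_family(2)[where x = x, OF dual] assms(2,3)
    by (intro V.card_le_dim_if_independent) auto
  finally show ?thesis
    using interpolation_formula[OF assms(1) \<open>finite J\<close> d dual determining] J dual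
    by (intro that[of J d]) auto
qed

lemma abs_le_sup_norm:
  assumes "compact \<Omega>" "f \<in> C_space \<Omega>" "y \<in> \<Omega>"
  shows "\<bar>f y\<bar> \<le> sup_norm \<Omega> f"
proof -
  have "continuous_on \<Omega> f"
    using assms(2) by (simp add: C_space_def)
  hence "compact ((\<lambda>y. \<bar>f y\<bar>) ` \<Omega>)"
    using assms(1) by (intro compact_continuous_image continuous_intros)
  hence "bdd_above ((\<lambda>y. \<bar>f y\<bar>) ` \<Omega>)"
    by (intro bounded_imp_bdd_above compact_imp_bounded)
  thus ?thesis
    unfolding sup_norm_def using assms(3) by (intro cSUP_upper)
qed

lemma Lq_norm_zero: "0 < q \<Longrightarrow> Lq_norm \<mu> q 0 = 0"
  by (simp add: Lq_norm_def zero_fun_apply)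

lemma rademacher_avg_SUP_Lq_ball_le:
  fixes \<Omega> :: "'a::topological_space set" and X :: "('a \<Rightarrow> real) set" and x :: "nat \<Rightarrow> 'a"
  assumes "compact \<Omega>" "X \<subseteq> C_space \<Omega>" "module.subspace fscale X"
    and "finite B" "module.span fscale B = X" "2 \<le> q" "0 < H"
    and nikolskii: "\<And>f. f \<in> X \<Longrightarrow> sup_norm \<Omega> f \<le> H * Lq_norm \<mu> q f"
    and x: "\<And>j. j < m \<Longrightarrow> x j \<in> \<Omega>"
  defines "T \<equiv> {f \<in> X. Lq_norm \<mu> q f \<le> 1}"
  shows "rademacher_avg m (\<lambda>\<epsilon>. SUP f\<in>T. \<bar>\<Sum>j<m. \<epsilon> j * \<bar>f (x j)\<bar> powr q\<bar>)
           \<le> 42 * q * H powr (q / 2) * sqrt (vector_space.dim fscale X)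
               * sqrt (SUP h\<in>T. \<Sum>j<m. \<bar>h (x j)\<bar> powr q)"
proof -
  interpret V: vector_space fscale
    by (rule vector_space_fscale)
  define S where "S = (SUP h\<in>T. \<Sum>j<m. \<bar>h (x j)\<bar> powr q)"
  have "0 \<in> T"
    using V.subspace_0[OF assms(3)] assms(6) by (simp add: T_def Lq_norm_zero)
  have bound: "\<bar>f (x j)\<bar> \<le> H" if "f \<in> T" "j < m" for f j
  proof -
    have "\<bar>f (x j)\<bar> \<le> H * Lq_norm \<mu> q f"
      using abs_le_sup_norm[OF assms(1), of f] nikolskii[of f] assms(2) x that by (force simp: T_def)
    also have "\<dots> \<le> H"
      using that(1) \<open>0 < H\<close> by (simp add: T_def mult_left_le)
    finally show ?thesis .
  qed
  have sum_bound: "(\<Sum>j<m. \<bar>f (x j)\<bar> powr q) \<le> S" if "f \<in> T" for f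
    unfolding S_def using that bound assms(6)
    by (intro cSUP_upper bdd_aboveI2[where M = "\<Sum>j<m. H powr q"] sum_mono powr_mono2) auto
  hence "0 \<le> S"
    using \<open>0 \<in> T\<close> by (meson order_trans powr_ge_zero sum_nonneg)
  obtain J d where J: "J \<subseteq> {..<m}" "card J \<le> vector_space.dim fscale X"
    and dual: "\<And>k k'. k \<in> J \<Longrightarrow> k' \<in> J \<Longrightarrow> d k (x k') = (if k = k' then 1 else 0)"
    and formula: "\<And>f j. f \<in> X \<Longrightarrow> j < m \<Longrightarrow> f (x j) = (\<Sum>k\<in>J. f (x k) * d k (x j))"
    using exists_interpolation_points[OF assms(3-5)] by blast
  show ?thesis
  proof (cases "J = {}")
    case True
    have "f (x j) = 0" if "f \<in> T" "j < m" for f j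
      using formula[of f j] that True by (simp add: T_def)
    hence "rademacher_avg m (\<lambda>\<epsilon>. SUP f\<in>T. \<bar>\<Sum>j<m. \<epsilon> j * \<bar>f (x j)\<bar> powr q\<bar>) = 0"
      using \<open>0 \<in> T\<close> by (intro rademacher_avg_SUP_abs_eq_0) (auto intro!: sum.neutral)
    thus ?thesis
      using \<open>0 \<le> S\<close> assms(6) by (simp add: S_def)
  next
    case False
    have "rademacher_avg m (\<lambda>\<epsilon>. SUP f\<in>T. \<bar>\<Sum>j<m. \<epsilon> j * \<bar>f (x j)\<bar> powr q\<bar>)
            \<le> 42 * q * H powr (q / 2) * sqrt (card J) * sqrt S"
    proof (rule rademacher_avg_SUP_abs_powr_le[where \<phi> = "\<lambda>f j. f (x j)"])
      show "\<exists>N. is_net m (\<lambda>f j. f (x j)) \<delta> T N \<and> real (card N) \<le> (1 + 2 * H / \<delta>) ^ card J"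
        if "0 < \<delta>" for \<delta>
        using J(1) finite_subset[OF J(1)] dual formula bound that \<open>0 < H\<close>
        by (intro exists_net_of_interpolation[where e = "\<lambda>k j. d k (x j)"]) (auto simp: T_def)
    qed (use \<open>0 \<in> T\<close> assms(6,7) bound sum_bound False finite_subset[OF J(1)] in
          \<open>auto simp: S_def Suc_le_eq card_gt_0_iff\<close>)
    also have "\<dots> \<le> 42 * q * H powr (q / 2) * sqrt (vector_space.dim fscale X) * sqrt S"
      using J(2) \<open>0 \<le> S\<close> assms(6) by (intro mult_right_mono mult_left_mono) auto
    finally show ?thesis
      by (simp add: S_def)
  qed
qed

text \<open>Only compactness of \<open>\<Omega>\<close> and the Nikolskii inequality are used: the bound holds for every
  measure \<open>\<mu>\<close> and every compact \<open>\<Omega>\<close>.\<close>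
theorem theorem4p3:
  shows "\<exists>c::real. c > 0 \<and>
    (\<forall>(d::nat) (\<Omega>::(nat \<Rightarrow> real) set) (\<mu>::(nat \<Rightarrow> real) measure) (X::((nat \<Rightarrow> real) \<Rightarrow> real) set)
       (N::nat) (q::real) (H::real) (m::nat) (x::nat \<Rightarrow> (nat \<Rightarrow> real)).
      d \<ge> 1 \<and> \<Omega> \<subseteq> Rd_set d \<and> compact \<Omega> \<and>
      prob_space \<mu> \<and> space \<mu> = \<Omega> \<and> sets \<mu> = sets (restrict_space borel \<Omega>) \<and>
      X \<subseteq> C_space \<Omega> \<and> module.subspace fscale X \<and> (\<exists>B. finite B \<and> module.span fscale B = X) \<and> vector_space.dim fscale X = N \<and>
      2 \<le> q \<and> H > 0 \<and> (\<forall>f\<in>X. sup_norm \<Omega> f \<le> H * Lq_norm \<mu> q f) \<and>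
      (\<forall>j<m. x j \<in> \<Omega>)
      \<longrightarrow>
      (\<Sum>\<epsilon>\<in>({..<m} \<rightarrow>\<^sub>E {-1, 1::real}).
          (SUP f\<in>{f\<in>X. Lq_norm \<mu> q f \<le> 1}. \<bar>\<Sum>j<m. \<epsilon> j * \<bar>f (x j)\<bar> powr q\<bar>)) / 2 ^ m
      \<le> c * q * H powr (q / 2) * sqrt (real N) *
         sqrt (SUP h\<in>{h\<in>X. Lq_norm \<mu> q h \<le> 1}. (\<Sum>j<m. \<bar>h (x j)\<bar> powr q)))"
proof (intro exI[of _ 42] conjI allI impI, goal_cases)
  case 1
  show ?case
    by simp
next
  case (2 d \<Omega> \<mu> X N q H m x)
  then obtain B where "finite B" "module.span fscale B = X"
    by blast
  with 2 have "rademacher_avg m (\<lambda>\<epsilon>. SUP f\<in>{f\<in>X. Lq_norm \<mu> q f \<le> 1}. \<bar>\<Sum>j<m. \<epsilon> j * \<bar>f (x j)\<bar> powr q\<bar>)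
      \<le> 42 * q * H powr (q / 2) * sqrt (vector_space.dim fscale X)
          * sqrt (SUP h\<in>{h\<in>X. Lq_norm \<mu> q h \<le> 1}. \<Sum>j<m. \<bar>h (x j)\<bar> powr q)"
    by (intro rademacher_avg_SUP_Lq_ball_le) auto
  with 2 show ?case
    by (simp add: rademacher_avg_def signs_def)
qed

end
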